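(* Let $M$ be a set of machines, $c$ a constant such that "polynomially bounded" means "at most $|M|^c$", and $\mathcal{S}\subseteq M^*$ a polynomial-size domain set of polynomial-length sequences. The randomized algorithm StatelessNoisyScheduler described below (with shared randomness) has the following properties: (1) it is local and stateless: each machine decides which job in its queue to work on based only on the jobs in its queue, the current time step, $|M|$, $c$, $\beta$, $T$, and the shared random bits, and it does not use job states; (2) with high probability over the shared random string, for all job sets $J$ with $\mathrm{seq}(j)\in\mathcal{S}$ for all $j\in J$ and with polynomially bounded size, congestion and dilation, for all noise levels $\beta$ and all polynomially bounded $T$: the algorithm with parameters $\beta,T$ takes $\widetilde{O}(\beta T)$ time steps, and for every $(\beta,T)$-good subset $J_S\subseteq J$, at least a fourth of the jobs of $J_S$ are completed.
   Context: Job-shop scheduling with unit jobs: machines $M$, jobs $J$; each job $j$ has a sequence $\mathrm{seq}(j)\in M^*$, a unique identifier $\mathrm{ind}(j)\in I:=\{1,\dots,|M|^c\}$, and position $\mathrm{pos}(j)_t\in\{0,\dots,\mathrm{len}(\mathrm{seq}(j))\}$ (initially $0$; completed at the last value); $\mathrm{que}(m)_t=\{j:\mathrm{seq}(j)_{\mathrm{pos}(j)_t}=m\}$; each step each machine works on at most one job of its queue, which advances one position. $C(J)=\max_m\sum_j|\{i:\mathrm{seq}(j)_i=m\}|$, $D(J)=\max_j\mathrm{len}(\mathrm{seq}(j))$. A subset $J_S\subseteq J$ is $(\beta,T)$-good if $|J_S|\ge\frac1\beta|J|$ and $C(J_S)+D(J_S)\le T$. Standing assumption $|M|\ge32$. For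 $h:M^*\times I\to\{0,\dots,L-1\}$, $h(j):=h(\mathrm{seq}(j),\mathrm{ind}(j))$, $\mathrm{virt}(j,i)=h(j)+i$ if $i<\mathrm{len}(\mathrm{seq}(j))$ and $\infty$ otherwise, $\mathrm{virt}(j)_t=\mathrm{virt}(j,\mathrm{pos}(j)_t)$. StatelessWeakScheduler$(m,L,l,h,t)$ at subroutine-local time $t$: $T'=\lfloor t/l\rfloor$, $Q=\{j\in\mathrm{que}(m)_t:\mathrm{virt}(j)_t=T'\}$; if $0<|Q|\le l$ work on an arbitrary $j\in Q$, else do nothing. StatelessNoisyScheduler$(m,|M|,c,\beta,T)$: let $L$ be the least power of two with $L\ge T$, $l=\lceil150c\ln|M|/\ln\ln|M|\rceil$, $l'=4\beta l$, $k=\lceil8(b+1)(2c+1)\ln|M|/\ln l\rceil$ for a constant $b$; sample $k$ independent uniform hash functions $h_1,\dots,h_k:M^*\times I\to\{0,\dots,L-1\}$ from the shared randomness; for $j=1,\dots,k$, run StatelessWeakScheduler$(m,L,l',h_j,t)$ for $t=0,\dots,2Ll'-1$. "With high probability" means probability at least $1-|M|^{-b'}$ with $b'$ an arbitrarily large constant depending on $b$. $\widetilde O$ hides polylogarithmic factors in $|M|$. *)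

theory Defs
  imports "HOL-Probability.Probability"
begin

(* Machines are natural numbers; a machine set is a finite M :: nat set.
   A job is a pair (seq j, ind j) :: nat list \<times> nat. *)
type_synonym job = "nat list \<times> nat"

(* Shared random string: coordinate (e, i, x) is the value of the i-th hash
   function for range size L = 2^e at argument x = (sequence, identifier). *)
type_synonym rstring = "nat \<times> nat \<times> job \<Rightarrow> nat"

definition rand_space :: "rstring measure" where
  "rand_space = PiM UNIV (\<lambda>(e::nat, i::nat, x::job). measure_pmf (pmf_of_set {0..<(2::nat)^e}))"

definition congestion :: "nat set \<Rightarrow> job set \<Rightarrow> nat" where
  "congestion M J = Max (insert 0 ((\<lambda>m. \<Sum>j\<in>J. count_list (fst j) m) ` M))"

definition dilation :: "job set \<Rightarrow> nat" where
  "dilation J = Max (insert 0 ((\<lambda>j. length (fst j)) ` J))"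

definition good_subset :: "nat set \<Rightarrow> real \<Rightarrow> nat \<Rightarrow> job set \<Rightarrow> job set \<Rightarrow> bool" where
  "good_subset M \<beta> T J JS \<longleftrightarrow> JS \<subseteq> J \<and> real (card JS) \<ge> real (card J) / \<beta>
      \<and> congestion M JS + dilation JS \<le> T"

definition que :: "job set \<Rightarrow> (job \<Rightarrow> nat) \<Rightarrow> nat \<Rightarrow> (job \<times> nat) set" where
  "que J P m = {(j, P j) | j. j \<in> J \<and> P j < length (fst j) \<and> fst j ! P j = m}"

(* StatelessWeakScheduler(m, L, l', h, t): set of allowed actions
   (None = do nothing, Some j = work on j), given the queue of m with positions.
   virt(j)_t = h j + pos(j)_t, finite since queued jobs have pos < len. *)
definition weak_allowed :: "real \<Rightarrow> (job \<Rightarrow> nat) \<Rightarrow> nat \<Rightarrow> (job \<times> nat) set \<Rightarrow> job option set" where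
  "weak_allowed l' h t Qm =
     (let T' = \<lfloor>real t / l'\<rfloor>;
          Q = {j. \<exists>p. (j, p) \<in> Qm \<and> p < length (fst j) \<and> int (h j + p) = T'}
      in if 0 < card Q \<and> real (card Q) \<le> l' then Some ` Q else {None})"

definition sched_l :: "nat \<Rightarrow> nat \<Rightarrow> nat" where
  "sched_l n c = nat \<lceil>150 * real c * ln (real n) / ln (ln (real n))\<rceil>"

definition sched_l' :: "nat \<Rightarrow> nat \<Rightarrow> real \<Rightarrow> real" where
  "sched_l' n c \<beta> = 4 * \<beta> * real (sched_l n c)"

definition sched_k :: "nat \<Rightarrow> nat \<Rightarrow> real \<Rightarrow> nat" where
  "sched_k n c b = nat \<lceil>8 * (b + 1) * (2 * real c + 1) * ln (real n) / ln (real (sched_l n c))\<rceil>"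

definition sched_e :: "nat \<Rightarrow> nat" where
  "sched_e T = (LEAST e. T \<le> 2 ^ e)"

(* number of steps t = 0, ..., 2 L l' - 1 of one weak-scheduler call *)
definition weak_steps :: "nat \<Rightarrow> nat \<Rightarrow> real \<Rightarrow> nat \<Rightarrow> nat" where
  "weak_steps n c \<beta> T = card {t::nat. real t \<le> 2 * real ((2::nat) ^ sched_e T) * sched_l' n c \<beta> - 1}"

definition noisy_time :: "nat \<Rightarrow> nat \<Rightarrow> real \<Rightarrow> real \<Rightarrow> nat \<Rightarrow> nat" where
  "noisy_time n c b \<beta> T = sched_k n c b * weak_steps n c \<beta> T"

(* Call number s (0-based) uses hash h_(s+1). *)
definition noisy_allowed :: "nat \<Rightarrow> nat \<Rightarrow> real \<Rightarrow> real \<Rightarrow> nat \<Rightarrow> rstring \<Rightarrow> nat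
      \<Rightarrow> (job \<times> nat) set \<Rightarrow> job option set" where
  "noisy_allowed n c b \<beta> T \<omega> t Qm =
     (let N = weak_steps n c \<beta> T; s = t div N; e = sched_e T
      in if s < sched_k n c b
         then weak_allowed (sched_l' n c \<beta>) (\<lambda>x. \<omega> (e, s, x)) (t mod N) Qm
         else {None})"

(* P t j = pos(j)_t; a run of the algorithm on job set J (every arbitrary choice allowed) *)
definition noisy_run :: "nat set \<Rightarrow> nat \<Rightarrow> real \<Rightarrow> real \<Rightarrow> nat \<Rightarrow> rstring \<Rightarrow> job set
      \<Rightarrow> (nat \<Rightarrow> job \<Rightarrow> nat) \<Rightarrow> bool" where
  "noisy_run M c b \<beta> T \<omega> J P \<longleftrightarrow>
     P 0 = (\<lambda>j. 0) \<and>
     (\<forall>t. \<exists>ch :: nat \<Rightarrow> job option.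
        (\<forall>m\<in>M. ch m \<in> noisy_allowed (card M) c b \<beta> T \<omega> t (que J (P t) m)) \<and>
        (\<forall>m. m \<notin> M \<longrightarrow> ch m = None) \<and>
        (\<forall>j. P (Suc t) j = (if \<exists>m. ch m = Some j then Suc (P t j) else P t j)))"

definition valid_jobs :: "nat set \<Rightarrow> nat \<Rightarrow> nat list set \<Rightarrow> job set \<Rightarrow> bool" where
  "valid_jobs M c S J \<longleftrightarrow> finite J \<and> inj_on snd J \<and>
     (\<forall>j\<in>J. fst j \<in> S \<and> snd j \<in> {1..card M ^ c}) \<and>
     card J \<le> card M ^ c \<and> congestion M J \<le> card M ^ c \<and> dilation J \<le> card M ^ c"

end

theory Submission
  imports Defs
begin

text \<open>In every call of the weak scheduler a job either completes or runs into a congested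
  slot: a (machine, phase) pair whose queue holds more than \<open>l' = 4 \<beta> l\<close> jobs at some step.
  Congested queues are disjoint, so at most \<open>|J| / l' \<le> |J\<^sub>S| / (4 l)\<close> slots are congested
  per call. Hence if more than three quarters of \<open>J\<^sub>S\<close> remain unfinished, these jobs form a
  set \<open>Y\<close> of congestion at most \<open>L\<close> that in each of the \<open>k\<close> calls is covered by fewer than
  \<open>|Y| / (3 l)\<close> slots. For fixed \<open>Y\<close> and fixed slots one call does this with probability at
  most \<open>(3 l) ^ (- |Y|)\<close> by AM-GM, the calls use independent hash functions, and a union bound
  over \<open>L\<close>, \<open>Y\<close> and the slot sets leaves failure probability at most \<open>|M| ^ (- b')\<close>.\<close>

section \<open>Runs of the scheduler\<close>

lemma card_nat_le_real:
  assumes "0 \<le> X"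
  shows "card {t::nat. real t \<le> X} = nat \<lfloor>X\<rfloor> + 1"
proof -
  have "{t::nat. real t \<le> X} = {..nat \<lfloor>X\<rfloor>}"
    using assms by (auto simp: le_floor_iff le_nat_iff)
  then show ?thesis by simp
qed

lemma weak_steps_bounds:
  assumes "sched_l' n c \<beta> \<ge> 1"
  shows "2 * real ((2::nat) ^ sched_e T) * sched_l' n c \<beta> - 1 < real (weak_steps n c \<beta> T)"
    and "real (weak_steps n c \<beta> T) \<le> 2 * real ((2::nat) ^ sched_e T) * sched_l' n c \<beta>"
proof -
  define X where "X = 2 * real ((2::nat) ^ sched_e T) * sched_l' n c \<beta> - 1"
  have "1 * 1 \<le> real ((2::nat) ^ sched_e T) * sched_l' n c \<beta>"
    using assms by (intro mult_mono) auto
  then have "0 \<le> X" unfolding X_def by simp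
  then have "real (weak_steps n c \<beta> T) = of_int \<lfloor>X\<rfloor> + 1"
    unfolding weak_steps_def X_def[symmetric] by (simp add: card_nat_le_real)
  then have "X < real (weak_steps n c \<beta> T)" "real (weak_steps n c \<beta> T) \<le> X + 1"
    using of_int_floor_le[of X] real_of_int_floor_add_one_gt[of X] by linarith+
  then show "2 * real ((2::nat) ^ sched_e T) * sched_l' n c \<beta> - 1 < real (weak_steps n c \<beta> T)"
    and "real (weak_steps n c \<beta> T) \<le> 2 * real ((2::nat) ^ sched_e T) * sched_l' n c \<beta>"
    unfolding X_def by simp_all
qed

locale scheduler_run =
  fixes M :: "nat set" and c :: nat and b \<beta> :: real and T :: nat and \<omega> :: rstring
    and J :: "job set" and P :: "nat \<Rightarrow> job \<Rightarrow> nat"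
  assumes run: "noisy_run M c b \<beta> T \<omega> J P"
    and finite_J: "finite J"
    and seq_in_M: "\<forall>j\<in>J. set (fst j) \<subseteq> M"
    and sched_l'_ge_1: "sched_l' (card M) c \<beta> \<ge> 1"
begin

text \<open>Global step \<open>t\<close> is local step \<open>t mod steps\<close> of call \<open>t div steps\<close>. In the notation
  of StatelessWeakScheduler, \<open>cap\<close> is \<open>l'\<close>, \<open>phase u\<close> is \<open>T'\<close> at local time \<open>u\<close>, and
  \<open>active t m\<close> is the set \<open>Q\<close> of machine \<open>m\<close>.\<close>

definition "steps = weak_steps (card M) c \<beta> T"
definition "calls = sched_k (card M) c b"
definition "cap = sched_l' (card M) c \<beta>"
definition "range_size = (2::nat) ^ sched_e T"
definition "hash s j = \<omega> (sched_e T, s, j)"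
definition "phase u = nat \<lfloor>real u / cap\<rfloor>"
definition "active t m = {j\<in>J. P t j < length (fst j) \<and> fst j ! P t j = m \<and>
    hash (t div steps) j + P t j = phase (t mod steps)}"

lemma cap_ge_1: "cap \<ge> 1"
  using sched_l'_ge_1 by (simp add: cap_def)

lemma steps_gt: "real steps > 2 * real range_size * cap - 1"
  using weak_steps_bounds(1)[OF sched_l'_ge_1] by (simp add: steps_def range_size_def cap_def)

lemma steps_pos: "steps > 0"
proof -
  have "1 * 1 \<le> real range_size * cap"
    using cap_ge_1 by (intro mult_mono) (auto simp: range_size_def)
  then show ?thesis using steps_gt by simp
qed

lemma phase_floor: "int (phase u) = \<lfloor>real u / cap\<rfloor>"
  unfolding phase_def using cap_ge_1 by simp

lemma phase_mono: "u \<le> v \<Longrightarrow> phase u \<le> phase v"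
  unfolding phase_def using cap_ge_1
  by (intro nat_mono floor_mono divide_right_mono) auto

lemma phase_Suc_le: "phase (Suc u) \<le> Suc (phase u)"
proof -
  have "real (Suc u) / cap \<le> real u / cap + 1"
    using cap_ge_1 by (simp add: divide_simps)
  then have "\<lfloor>real (Suc u) / cap\<rfloor> \<le> \<lfloor>real u / cap\<rfloor> + 1"
    by (metis floor_add_int floor_mono of_int_1)
  then show ?thesis using phase_floor[of u] phase_floor[of "Suc u"] by linarith
qed

lemma finite_active: "finite (active t m)"
  unfolding active_def using finite_J by auto

lemma noisy_allowed_eq:
  "noisy_allowed (card M) c b \<beta> T \<omega> t (que J (P t) m) =
    (if t div steps < calls \<and> 0 < card (active t m) \<and> real (card (active t m)) \<le> cap
     then Some ` active t m else {None})"
proof -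
  have phase_eq: "\<And>x. (int x = \<lfloor>real (t mod steps) / cap\<rfloor>) = (x = phase (t mod steps))"
    by (simp add: phase_floor[symmetric])
  have "{j. \<exists>p. (j, p) \<in> que J (P t) m \<and> p < length (fst j) \<and>
      int (hash (t div steps) j + p) = \<lfloor>real (t mod steps) / cap\<rfloor>} = active t m"
    unfolding active_def que_def phase_eq by auto
  then show ?thesis
    unfolding noisy_allowed_def weak_allowed_def Let_def steps_def[symmetric]
      calls_def[symmetric] cap_def[symmetric]
    by (simp add: hash_def[abs_def])
qed

lemma step_choice:
  obtains ch where "\<And>m. m \<in> M \<Longrightarrow> ch m \<in> noisy_allowed (card M) c b \<beta> T \<omega> t (que J (P t) m)"
    and "\<And>m. m \<notin> M \<Longrightarrow> ch m = None"
    and "\<And>j. P (Suc t) j = (if \<exists>m. ch m = Some j then Suc (P t j) else P t j)"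
  using run that unfolding noisy_run_def by blast

lemma pos_0: "P 0 j = 0"
  using run unfolding noisy_run_def by simp

lemma pos_change_imp_served:
  assumes "P (Suc t) j \<noteq> P t j"
  shows "t div steps < calls \<and> P (Suc t) j = Suc (P t j) \<and>
    (\<exists>m\<in>M. j \<in> active t m \<and> real (card (active t m)) \<le> cap)"
proof -
  obtain ch where allowed: "\<And>m. m \<in> M \<Longrightarrow> ch m \<in> noisy_allowed (card M) c b \<beta> T \<omega> t (que J (P t) m)"
    and idle: "\<And>m. m \<notin> M \<Longrightarrow> ch m = None"
    and step: "\<And>j. P (Suc t) j = (if \<exists>m. ch m = Some j then Suc (P t j) else P t j)"
    using step_choice[of t] by blast
  from assms step obtain m where m: "ch m = Some j" and "P (Suc t) j = Suc (P t j)"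
    by metis
  moreover have "m \<in> M" using m idle by fastforce
  moreover have "Some j \<in> noisy_allowed (card M) c b \<beta> T \<omega> t (que J (P t) m)"
    using allowed m \<open>m \<in> M\<close> by metis
  ultimately show ?thesis unfolding noisy_allowed_eq by (auto split: if_splits)
qed

lemma uncongested_serves:
  assumes "t div steps < calls" "m \<in> M" "0 < card (active t m)" "real (card (active t m)) \<le> cap"
  shows "\<exists>j\<in>active t m. P (Suc t) j = Suc (P t j)"
proof -
  obtain ch where allowed: "\<And>m. m \<in> M \<Longrightarrow> ch m \<in> noisy_allowed (card M) c b \<beta> T \<omega> t (que J (P t) m)"
    and "\<And>m. m \<notin> M \<Longrightarrow> ch m = None"
    and step: "\<And>j. P (Suc t) j = (if \<exists>m. ch m = Some j then Suc (P t j) else P t j)"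
    using step_choice[of t] by blast
  have "ch m \<in> Some ` active t m"
    using allowed[OF assms(2)] assms unfolding noisy_allowed_eq by simp
  then obtain j where "j \<in> active t m" "ch m = Some j" by auto
  moreover from this(2) have "P (Suc t) j = Suc (P t j)"
    using step[of j] by (metis (mono_tags))
  ultimately show ?thesis by blast
qed

lemma pos_Suc_cases: "P (Suc t) j = P t j \<or> P (Suc t) j = Suc (P t j)"
  using pos_change_imp_served by blast

lemma pos_mono: "t \<le> t' \<Longrightarrow> P t j \<le> P t' j"
proof (induction rule: dec_induct)
  case (step t')
  then show ?case using pos_Suc_cases[of t' j] by auto
qed simp

lemma pos_le_length: "j \<in> J \<Longrightarrow> P t j \<le> length (fst j)"
proof (induction t)
  case (Suc t)
  then show ?case
    using pos_change_imp_served[of t j] unfolding active_def by (cases "P (Suc t) j = P t j") auto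
qed (simp add: pos_0)

lemma Suc_mod_steps:
  "Suc t mod steps \<noteq> 0 \<Longrightarrow> Suc t div steps = t div steps \<and> Suc t mod steps = Suc (t mod steps)"
  using steps_pos by (metis div_Suc mod_Suc)

lemma call_div_mod: "u < steps \<Longrightarrow> (s * steps + u) div steps = s \<and> (s * steps + u) mod steps = u"
  using steps_pos by simp

lemma active_machine_unique: "j \<in> active t m \<Longrightarrow> j \<in> active t' m' \<Longrightarrow> P t' j = P t j \<Longrightarrow> m = m'"
  unfolding active_def by auto

definition "phase_continues t \<longleftrightarrow>
  Suc t mod steps \<noteq> 0 \<and> phase (Suc (t mod steps)) = phase (t mod steps)"

lemma active_Suc_subset:
  assumes "phase_continues t"
  shows "active (Suc t) m \<subseteq> active t m - {j. P (Suc t) j = Suc (P t j)}"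
proof
  fix j assume j: "j \<in> active (Suc t) m"
  have same: "Suc t div steps = t div steps" "phase (Suc t mod steps) = phase (t mod steps)"
    using assms Suc_mod_steps unfolding phase_continues_def by auto
  have "P (Suc t) j = P t j"
  proof (rule ccontr)
    assume "P (Suc t) j \<noteq> P t j"
    then obtain m' where "j \<in> active t m'" "P (Suc t) j = Suc (P t j)"
      using pos_change_imp_served by blast
    then show False using j same unfolding active_def by auto
  qed
  then show "j \<in> active t m - {j. P (Suc t) j = Suc (P t j)}"
    using j same unfolding active_def by auto
qed

lemma congested_active_frozen:
  assumes "phase_continues t" "cap < real (card (active t m))"
  shows "active (Suc t) m = active t m"
proof
  show "active (Suc t) m \<subseteq> active t m" using active_Suc_subset[OF assms(1)] by blast
  show "active t m \<subseteq> active (Suc t) m"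
  proof
    fix j assume j: "j \<in> active t m"
    have same: "Suc t div steps = t div steps" "phase (Suc t mod steps) = phase (t mod steps)"
      using assms Suc_mod_steps unfolding phase_continues_def by auto
    have "P (Suc t) j = P t j"
    proof (rule ccontr)
      assume "P (Suc t) j \<noteq> P t j"
      then obtain m' where "j \<in> active t m'" "real (card (active t m')) \<le> cap"
        using pos_change_imp_served by blast
      moreover have "m' = m" using active_machine_unique[OF \<open>j \<in> active t m'\<close> j] by simp
      ultimately show False using assms(2) by simp
    qed
    then show "j \<in> active (Suc t) m" using j same unfolding active_def by auto
  qed
qed

text \<open>An uncongested nonempty queue serves one of its jobs per step, and within a phase the
  served job leaves the queue.\<close>

lemma active_card_backwards:
  assumes u: "u < steps" and j: "j \<in> active (s * steps + u) m"
    and uncongested: "real (card (active (s * steps + u) m)) \<le> cap"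
    and s: "s < calls" and m: "m \<in> M"
  shows "d \<le> u \<Longrightarrow> phase (u - d) = phase u \<Longrightarrow>
    real (card (active (s * steps + (u - d)) m)) \<le> cap \<and>
    card (active (s * steps + u) m) + d \<le> card (active (s * steps + (u - d)) m)"
proof (induction d)
  case 0
  then show ?case using uncongested by simp
next
  case (Suc d)
  define t where "t = s * steps + (u - Suc d)"
  have phase_d: "phase (u - d) = phase u"
    using phase_mono[of "u - Suc d" "u - d"] phase_mono[of "u - d" u] Suc.prems by simp
  with Suc have IH: "real (card (active (Suc t) m)) \<le> cap"
    "card (active (s * steps + u) m) + d \<le> card (active (Suc t) m)"
    unfolding t_def by (auto simp: Suc_diff_Suc)
  have t_div_mod: "t div steps = s" "t mod steps = u - Suc d" "Suc t mod steps = u - d"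
    using call_div_mod[of "u - Suc d" s] call_div_mod[of "u - d" s] u Suc.prems
    unfolding t_def by (auto simp: Suc_diff_Suc)
  have cont: "phase_continues t"
    unfolding phase_continues_def t_div_mod using Suc.prems phase_d by (simp add: Suc_diff_Suc)
  have not_congested: "\<not> cap < real (card (active t m))"
    using congested_active_frozen[OF cont] IH(1) by force
  have "card (active (Suc t) m) > 0"
    using IH(2) j finite_active card_gt_0_iff[of "active (s * steps + u) m"] by fastforce
  then have "card (active t m) > 0"
    using active_Suc_subset[OF cont] finite_active card_mono[of "active t m" "active (Suc t) m"]
    by fastforce
  then obtain j' where j': "j' \<in> active t m" "P (Suc t) j' = Suc (P t j')"
    using uncongested_serves[of t m] t_div_mod s m not_congested by fastforce
  have "active (Suc t) m \<subseteq> active t m - {j'}" using active_Suc_subset[OF cont] j' by blast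
  then have "card (active (Suc t) m) < card (active t m)"
    using j'(1) finite_active by (meson card_Diff1_less card_mono finite_Diff le_less_trans)
  then show ?case using IH(2) not_congested unfolding t_def by simp
qed

lemma phase_start:
  assumes "phase (Suc u) \<noteq> phase u"
  obtains u0 where "u0 \<le> u" "phase u0 = phase u" "cap < real (u - u0) + 2"
proof -
  define \<tau> where "\<tau> = phase u"
  have "phase (Suc u) = Suc \<tau>"
    using phase_Suc_le[of u] phase_mono[of u "Suc u"] assms unfolding \<tau>_def by simp
  then have "real \<tau> \<le> real u / cap" "real (Suc \<tau>) \<le> real (Suc u) / cap"
    using phase_floor[of u] phase_floor[of "Suc u"] of_int_floor_le unfolding \<tau>_def
    by (metis of_int_of_nat_eq)+
  then have tau: "real \<tau> * cap \<le> real u" "real (Suc \<tau>) * cap \<le> real (Suc u)"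
    using cap_ge_1 by (simp_all add: field_simps)
  define u0 where "u0 = nat \<lceil>real \<tau> * cap\<rceil>"
  have u0: "real \<tau> * cap \<le> real u0" "real u0 < real \<tau> * cap + 1"
    unfolding u0_def using cap_ge_1 ceiling_correct[of "real \<tau> * cap"] by auto
  have "u0 \<le> u" using tau(1) unfolding u0_def by (simp add: ceiling_le_iff nat_le_iff)
  moreover have "real \<tau> \<le> real u0 / cap" "real u0 / cap < real \<tau> + 1"
    using u0 cap_ge_1 by (simp_all add: field_simps)
  then have "\<lfloor>real u0 / cap\<rfloor> = int \<tau>" by (simp add: floor_eq_iff)
  then have "phase u0 = \<tau>" unfolding phase_def by simp
  moreover have "cap < real (u - u0) + 2" using u0 tau(2) \<open>u0 \<le> u\<close> by (simp add: algebra_simps)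
  ultimately show ?thesis using that unfolding \<tau>_def by blast
qed

lemma uncongested_served_by_phase_end:
  assumes u: "u < steps" and s: "s < calls" and m: "m \<in> M"
    and j: "j \<in> active (s * steps + u) m"
    and uncongested: "real (card (active (s * steps + u) m)) \<le> cap"
    and phase_ends: "phase (Suc u) \<noteq> phase u"
  shows "P (Suc (s * steps + u)) j = Suc (P (s * steps + u) j)"
proof (rule ccontr)
  assume unserved: "P (Suc (s * steps + u)) j \<noteq> Suc (P (s * steps + u) j)"
  define A where "A = active (s * steps + u) m"
  have "(s * steps + u) div steps = s" using call_div_mod u by auto
  moreover have "card A > 0" using j finite_active card_gt_0_iff unfolding A_def by blast
  ultimately obtain j' where j': "j' \<in> A" "P (Suc (s * steps + u)) j' = Suc (P (s * steps + u) j')"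
    using uncongested_serves[of "s * steps + u" m] s m uncongested unfolding A_def by auto
  then have "{j, j'} \<subseteq> A" "j \<noteq> j'" using j unserved unfolding A_def by auto
  then have "card A \<ge> 2"
    using finite_active card_mono[of A "{j, j'}"] unfolding A_def by fastforce
  moreover obtain u0 where "u0 \<le> u" "phase u0 = phase u" "cap < real (u - u0) + 2"
    using phase_start[OF phase_ends] .
  moreover from this have "card A + (u - u0) \<le> card (active (s * steps + u0) m)"
    "real (card (active (s * steps + u0) m)) \<le> cap"
    using active_card_backwards[OF u j uncongested s m, of "u - u0"] unfolding A_def by auto
  ultimately show False by linarith
qed

lemma pos_Suc_completed: "P t j = length (fst j) \<Longrightarrow> P (Suc t) j = P t j"
  using pos_change_imp_served[of t j] unfolding active_def by auto

lemma active_current_machine: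
  assumes "j \<in> J" "P t j < length (fst j)" "hash (t div steps) j + P t j = phase (t mod steps)"
  shows "fst j ! P t j \<in> M" "j \<in> active t (fst j ! P t j)"
  using assms seq_in_M nth_mem unfolding active_def by blast+

definition "meets_congestion s u j \<longleftrightarrow>
  (\<exists>m\<in>M. j \<in> active (s * steps + u) m \<and> cap < real (card (active (s * steps + u) m)))"

lemma on_time_step:
  assumes s: "s < calls" and u: "u < steps" and j: "j \<in> J"
    and less: "P (s * steps + u) j < length (fst j)"
    and on_time: "phase u \<le> hash s j + P (s * steps + u) j"
  shows "meets_congestion s u j \<or> phase (Suc u) \<le> hash s j + P (Suc (s * steps + u)) j"
proof -
  define t where "t = s * steps + u"
  have t_div_mod: "t div steps = s" "t mod steps = u" using call_div_mod u unfolding t_def by auto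
  consider "P (Suc t) j = Suc (P t j)" | "phase u < hash s j + P t j" |
    (late) "P (Suc t) j = P t j" "hash s j + P t j = phase u"
    using pos_Suc_cases[of t j] on_time unfolding t_def by linarith
  then show ?thesis
  proof cases
    case late
    define m where "m = fst j ! P t j"
    have m: "m \<in> M" "j \<in> active t m"
      using active_current_machine[OF j less[folded t_def]] late(2) t_div_mod unfolding m_def by auto
    show ?thesis
    proof (cases "cap < real (card (active t m))")
      case True
      then show ?thesis using m unfolding meets_congestion_def t_def by blast
    next
      case False
      then have "phase (Suc u) = phase u"
        using uncongested_served_by_phase_end[OF u s m(1)] m(2) late(1) unfolding t_def by fastforce
      then show ?thesis using late unfolding t_def by simp
    qed
  qed (use phase_Suc_le[of u] on_time pos_Suc_cases[of t j] in \<open>auto simp: t_def\<close>)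
qed

lemma keeps_pace:
  assumes s: "s < calls" and j: "j \<in> J"
  shows "u \<le> steps \<Longrightarrow> (\<exists>u'<u. meets_congestion s u' j) \<or>
    P (s * steps + u) j = length (fst j) \<or> phase u \<le> hash s j + P (s * steps + u) j"
proof (induction u)
  case 0
  then show ?case by (simp add: phase_def)
next
  case (Suc u)
  then have u: "u < steps" by simp
  from Suc.IH u consider (congested) "\<exists>u'<u. meets_congestion s u' j"
    | (completed) "P (s * steps + u) j = length (fst j)"
    | (on_time) "phase u \<le> hash s j + P (s * steps + u) j" "P (s * steps + u) j < length (fst j)"
    using pos_le_length[OF j, of "s * steps + u"] by fastforce
  then show ?case
  proof cases
    case congested
    then show ?thesis using less_SucI by blast
  next
    case completed
    then show ?thesis using pos_Suc_completed by simp
  next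
    case on_time
    then show ?thesis using on_time_step[OF s u j on_time(2,1)] by auto
  qed
qed

lemma congested_stuck:
  assumes u: "u < steps" and j: "j \<in> active (s * steps + u) m"
    and congested: "cap < real (card (active (s * steps + u) m))"
  shows "u + d \<le> steps \<Longrightarrow> P (s * steps + (u + d)) j = P (s * steps + u) j \<and>
    (u + d < steps \<and> phase (u + d) = phase u \<longrightarrow> active (s * steps + (u + d)) m = active (s * steps + u) m)"
proof (induction d)
  case 0
  then show ?case by simp
next
  case (Suc d)
  define t where "t = s * steps + (u + d)"
  have ud: "u + d < steps" and t_Suc: "s * steps + (u + Suc d) = Suc t"
    using Suc.prems unfolding t_def by auto
  from Suc.IH ud have IH: "P t j = P (s * steps + u) j"
    "phase (u + d) = phase u \<Longrightarrow> active t m = active (s * steps + u) m"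
    unfolding t_def by auto
  have t_div_mod: "t div steps = s" "t mod steps = u + d" using call_div_mod ud unfolding t_def by auto
  have j_on_time: "hash s j + P (s * steps + u) j = phase u"
    using j call_div_mod[OF u] unfolding active_def by simp
  have unserved: "P (Suc t) j = P t j"
  proof (rule ccontr)
    assume "P (Suc t) j \<noteq> P t j"
    then obtain m' where m': "j \<in> active t m'" "real (card (active t m')) \<le> cap"
      using pos_change_imp_served by blast
    have "phase (u + d) = phase u" using m'(1) t_div_mod IH(1) j_on_time unfolding active_def by simp
    moreover have "m' = m" using active_machine_unique[OF j m'(1)] IH(1) by simp
    ultimately show False using m'(2) congested IH(2) by simp
  qed
  have "active (Suc t) m = active (s * steps + u) m"
    if ph: "u + Suc d < steps" "phase (u + Suc d) = phase u"
  proof -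
    have "phase (u + d) = phase u"
      using phase_mono[of u "u + d"] phase_mono[of "u + d" "u + Suc d"] ph by simp
    moreover have "Suc t mod steps = u + Suc d" using call_div_mod[of "u + Suc d" s] ph t_Suc by metis
    ultimately have "phase_continues t"
      unfolding phase_continues_def using t_div_mod ph by simp
    then show ?thesis using congested_active_frozen IH(2) \<open>phase (u + d) = phase u\<close> congested by simp
  qed
  then show ?case using unserved IH(1) t_Suc by simp
qed

lemma congested_unique:
  assumes "u1 < steps" "u2 < steps"
    and "j \<in> active (s * steps + u1) m1" "cap < real (card (active (s * steps + u1) m1))"
    and "j \<in> active (s * steps + u2) m2" "cap < real (card (active (s * steps + u2) m2))"
  shows "m1 = m2 \<and> phase u1 = phase u2"
proof -
  have *: "m1 = m2 \<and> phase u1 = phase u2"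
    if le: "u1 \<le> u2" "u2 < steps" and j1: "j \<in> active (s * steps + u1) m1"
      and congested: "cap < real (card (active (s * steps + u1) m1))"
      and j2: "j \<in> active (s * steps + u2) m2"
    for u1 u2 m1 m2
  proof -
    have "P (s * steps + (u1 + (u2 - u1))) j = P (s * steps + u1) j"
      using congested_stuck[OF _ j1 congested, of "u2 - u1"] le by simp
    then have "P (s * steps + u2) j = P (s * steps + u1) j" using le by simp
    moreover have "(s * steps + u1) div steps = s" "(s * steps + u1) mod steps = u1"
      "(s * steps + u2) div steps = s" "(s * steps + u2) mod steps = u2"
      using call_div_mod le by auto
    ultimately show ?thesis using j1 j2 unfolding active_def by auto
  qed
  show ?thesis
  proof (cases "u1 \<le> u2")
    case True
    then show ?thesis using * assms by blast
  next
    case False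
    then show ?thesis using *[of u2 u1 m2 m1] assms by fastforce
  qed
qed

definition "failures s = {(m, \<tau>). m \<in> M \<and>
    (\<exists>u<steps. phase u = \<tau> \<and> cap < real (card (active (s * steps + u) m)))}"

lemma finite_failures: "finite M \<Longrightarrow> finite (failures s)"
  by (rule finite_subset[of _ "M \<times> phase ` {..<steps}"]) (auto simp: failures_def)

text \<open>The congested queues behind distinct failures are disjoint, and each holds more than
  \<open>cap\<close> jobs.\<close>

lemma card_failures_le:
  assumes "finite M"
  shows "real (card (failures s)) * cap \<le> real (card J)"
proof -
  have "\<forall>f\<in>failures s. \<exists>u. u < steps \<and> phase u = snd f \<and> cap < real (card (active (s * steps + u) (fst f)))"
    unfolding failures_def by auto
  then obtain U where U: "\<And>f. f \<in> failures s \<Longrightarrow>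
      U f < steps \<and> phase (U f) = snd f \<and> cap < real (card (active (s * steps + U f) (fst f)))"
    by metis
  define W where "W f = active (s * steps + U f) (fst f)" for f
  have disjoint: "W f1 \<inter> W f2 = {}" if f: "f1 \<in> failures s" "f2 \<in> failures s" "f1 \<noteq> f2" for f1 f2
  proof (rule ccontr)
    assume "W f1 \<inter> W f2 \<noteq> {}"
    then obtain j where "j \<in> W f1" "j \<in> W f2" by blast
    then have "fst f1 = fst f2 \<and> phase (U f1) = phase (U f2)"
      using congested_unique[of "U f1" "U f2" j s "fst f1" "fst f2"] U[OF f(1)] U[OF f(2)]
      unfolding W_def by blast
    then show False using U[OF f(1)] U[OF f(2)] f(3) by (simp add: prod_eq_iff)
  qed
  have "real (card (failures s)) * cap = (\<Sum>f\<in>failures s. cap)" by simp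
  also have "\<dots> \<le> (\<Sum>f\<in>failures s. real (card (W f)))"
    using U by (intro sum_mono) (auto simp: W_def less_imp_le)
  also have "\<dots> = real (card (\<Union>f\<in>failures s. W f))"
    using card_UN_disjoint[OF finite_failures[OF assms], where A=W] disjoint finite_active
    unfolding W_def by simp
  also have "\<dots> \<le> real (card J)"
    using finite_J by (intro of_nat_mono card_mono) (auto simp: W_def active_def)
  finally show ?thesis .
qed

lemma phase_steps_ge: "2 * range_size - 1 \<le> phase steps"
proof -
  have "real (2 * range_size - 1) * cap < real steps"
    using steps_gt cap_ge_1 by (simp add: range_size_def of_nat_diff algebra_simps)
  then have "real (2 * range_size - 1) \<le> real steps / cap"
    using cap_ge_1 by (simp add: field_simps)
  then have "int (2 * range_size - 1) \<le> \<lfloor>real steps / cap\<rfloor>" by (simp add: le_floor_iff)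
  then show ?thesis using phase_floor[of steps] by linarith
qed

lemma unfinished_meets_failure:
  assumes s: "s < calls" and j: "j \<in> J" and unfinished: "P (calls * steps) j \<noteq> length (fst j)"
    and hash: "hash s j < range_size" and length: "length (fst j) \<le> range_size"
  shows "\<exists>p<length (fst j). (fst j ! p, hash s j + p) \<in> failures s \<and> hash s j + p < 2 * range_size"
proof -
  have "s * steps + steps \<le> calls * steps"
    using s by (metis Suc_leI add.commute mult_Suc mult_le_mono1)
  then have "P (s * steps + steps) j \<le> P (calls * steps) j" by (rule pos_mono)
  moreover have "P (calls * steps) j < length (fst j)"
    using pos_le_length[OF j] unfinished le_neq_implies_less by blast
  ultimately have "P (s * steps + steps) j < length (fst j)" by linarith
  moreover have "phase steps \<ge> 2 * range_size - 1" by (rule phase_steps_ge)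
  ultimately obtain u m where u: "u < steps" "m \<in> M" "j \<in> active (s * steps + u) m"
    "cap < real (card (active (s * steps + u) m))"
    using keeps_pace[OF s j, of steps] hash length unfolding meets_congestion_def by auto
  define p where "p = P (s * steps + u) j"
  have p: "p < length (fst j)" "fst j ! p = m" "hash s j + p = phase u"
    using u(3) call_div_mod[OF u(1)] unfolding active_def p_def by auto
  then have "(fst j ! p, hash s j + p) \<in> failures s" using u unfolding failures_def by auto
  moreover have "hash s j + p < 2 * range_size" using p(1) hash length by linarith
  ultimately show ?thesis using p(1) by blast
qed

lemma failures_cover:
  assumes "finite M" "s < calls"
  obtains F where "F \<subseteq> M \<times> {..<2 * range_size}" "real (card F) * cap \<le> real (card J)"
    and "\<And>j. j \<in> J \<Longrightarrow> P (calls * steps) j \<noteq> length (fst j) \<Longrightarrow> hash s j < range_size \<Longrightarrow>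
      length (fst j) \<le> range_size \<Longrightarrow> \<exists>p<length (fst j). (fst j ! p, hash s j + p) \<in> F"
proof
  let ?F = "failures s \<inter> (M \<times> {..<2 * range_size})"
  show "?F \<subseteq> M \<times> {..<2 * range_size}" by blast
  have "card ?F \<le> card (failures s)" using finite_failures[OF assms(1)] by (intro card_mono) auto
  then show "real (card ?F) * cap \<le> real (card J)"
    using card_failures_le[OF assms(1), of s] cap_ge_1 by (smt (verit) mult_right_mono of_nat_le_iff)
  show "\<exists>p<length (fst j). (fst j ! p, hash s j + p) \<in> ?F"
    if "j \<in> J" "P (calls * steps) j \<noteq> length (fst j)" "hash s j < range_size"
      "length (fst j) \<le> range_size" for j
    using unfinished_meets_failure[OF assms(2) that] unfolding failures_def by auto
qed

end

section \<open>Trapped job sets\<close>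

text \<open>A slot \<open>(m, \<tau>) \<in> F\<close> pairs a machine with a phase, and \<open>w s\<close> is the hash function of
  call \<open>s\<close>.\<close>

definition trapped :: "nat set \<Rightarrow> nat \<Rightarrow> nat \<Rightarrow> nat \<Rightarrow> (nat \<Rightarrow> job \<Rightarrow> nat) \<Rightarrow> job set \<Rightarrow> bool" where
  "trapped M l K e w Y \<longleftrightarrow> Y \<noteq> {} \<and> (\<forall>m\<in>M. (\<Sum>j\<in>Y. count_list (fst j) m) \<le> 2 ^ e) \<and>
    (\<forall>s<K. \<exists>F. F \<subseteq> M \<times> {..<2 * 2 ^ e} \<and> 3 * l * card F < card Y \<and>
      (\<forall>j\<in>Y. \<exists>p<length (fst j). (fst j ! p, w s j + p) \<in> F))"

definition job_pool :: "nat set \<Rightarrow> nat \<Rightarrow> nat list set \<Rightarrow> job set" where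
  "job_pool M c S = S \<times> {1..card M ^ c}"

text \<open>Hash values outside \<open>{0..<2 ^ e}\<close> have probability zero but do occur in
  \<open>space rand_space\<close>, hence the explicit range condition.\<close>

definition good_hashes :: "nat set \<Rightarrow> nat \<Rightarrow> real \<Rightarrow> nat list set \<Rightarrow> rstring set" where
  "good_hashes M c b S = {\<omega>. \<forall>e. 2 ^ e < 2 * card M ^ c \<longrightarrow>
    (\<forall>s<sched_k (card M) c b. \<forall>j\<in>job_pool M c S. \<omega> (e, s, j) < 2 ^ e) \<and>
    \<not> (\<exists>Y\<subseteq>job_pool M c S. trapped M (sched_l (card M) c) (sched_k (card M) c b) e (\<lambda>s j. \<omega> (e, s, j)) Y)}"

lemma sched_e_bounds:
  assumes "1 \<le> T"
  shows "T \<le> 2 ^ sched_e T" and "2 ^ sched_e T < 2 * T"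
proof -
  show le: "T \<le> 2 ^ sched_e T"
    unfolding sched_e_def by (rule LeastI[of _ T]) (simp add: less_imp_le)
  show "2 ^ sched_e T < 2 * T"
  proof (cases "sched_e T")
    case 0
    then show ?thesis using assms by simp
  next
    case (Suc e)
    then have "\<not> T \<le> 2 ^ e" unfolding sched_e_def by (metis Least_le Suc_n_not_le_n)
    then show ?thesis using Suc by simp
  qed
qed

lemma sum_count_list_le_congestion:
  assumes "finite M" "finite J" "Y \<subseteq> J" "m \<in> M"
  shows "(\<Sum>j\<in>Y. count_list (fst j) m) \<le> congestion M J"
proof -
  have "(\<Sum>j\<in>Y. count_list (fst j) m) \<le> (\<Sum>j\<in>J. count_list (fst j) m)"
    using assms(2,3) by (rule sum_mono2) simp
  also have "\<dots> \<le> congestion M J" unfolding congestion_def using assms(1,4) by (intro Max_ge) auto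
  finally show ?thesis .
qed

lemma length_le_dilation: "finite J \<Longrightarrow> j \<in> J \<Longrightarrow> length (fst j) \<le> dilation J"
  unfolding dilation_def by (intro Max_ge) auto

lemma valid_jobs_subset_pool: "valid_jobs M c S J \<Longrightarrow> J \<subseteq> job_pool M c S"
  unfolding valid_jobs_def job_pool_def by (auto simp: mem_Times_iff)

lemma one_le_sched_l': "sched_l n c \<ge> 1 \<Longrightarrow> \<beta> \<ge> 1 \<Longrightarrow> sched_l' n c \<beta> \<ge> 1"
  using mult_mono[of 4 "4 * \<beta>" 1 "real (sched_l n c)"] unfolding sched_l'_def by simp

lemma three_quarters_remaining:
  fixes \<beta> :: real
  assumes "finite JS" "C \<subseteq> JS" "4 * card C < card JS" "real (card J) \<le> \<beta> * real (card JS)" "\<beta> \<ge> 1"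
  shows "JS - C \<noteq> {}" and "3 * real (card J) < 4 * \<beta> * real (card (JS - C))"
proof -
  have "card JS = card C + card (JS - C)"
    using card_Diff_subset[OF finite_subset[OF assms(2,1)] assms(2)] card_mono[OF assms(1,2)] by simp
  then have less: "3 * real (card JS) < 4 * real (card (JS - C))" using assms(3) by linarith
  then have "real (card (JS - C)) > 0" by linarith
  then show "JS - C \<noteq> {}" by (metis card.empty of_nat_0 less_irrefl)
  have "3 * real (card J) \<le> \<beta> * (3 * real (card JS))" using assms(4) by simp
  also have "\<dots> < \<beta> * (4 * real (card (JS - C)))" using mult_strict_left_mono[OF less, of \<beta>] assms(5) by simp
  finally show "3 * real (card J) < 4 * \<beta> * real (card (JS - C))" by simp
qed

lemma (in scheduler_run) unfinished_trapped:
  assumes "finite M" and Y: "Y \<subseteq> J" "Y \<noteq> {}"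
    and congestion: "\<forall>m\<in>M. (\<Sum>j\<in>Y. count_list (fst j) m) \<le> range_size"
    and unfinished: "\<forall>j\<in>Y. P (calls * steps) j \<noteq> length (fst j) \<and> length (fst j) \<le> range_size"
    and hash_range: "\<forall>s<calls. \<forall>j\<in>Y. hash s j < range_size"
    and many: "3 * real (card J) < 4 * \<beta> * real (card Y)"
  shows "trapped M (sched_l (card M) c) calls (sched_e T) (\<lambda>s j. \<omega> (sched_e T, s, j)) Y"
  unfolding trapped_def
proof (intro conjI allI impI)
  define l where "l = sched_l (card M) c"
  have cap: "cap = 4 * \<beta> * real l" unfolding cap_def sched_l'_def l_def ..
  have "\<beta> > 0"
  proof (rule ccontr)
    assume "\<not> \<beta> > 0"
    then have "4 * \<beta> * real l \<le> 0" by (simp add: mult_nonpos_nonneg)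
    then show False using cap cap_ge_1 by simp
  qed
  fix s assume s: "s < calls"
  obtain F where F: "F \<subseteq> M \<times> {..<2 * range_size}" "real (card F) * cap \<le> real (card J)"
    and cover: "\<And>j. j \<in> J \<Longrightarrow> P (calls * steps) j \<noteq> length (fst j) \<Longrightarrow> hash s j < range_size \<Longrightarrow>
      length (fst j) \<le> range_size \<Longrightarrow> \<exists>p<length (fst j). (fst j ! p, hash s j + p) \<in> F"
    using failures_cover[OF assms(1) s] by blast
  have "4 * \<beta> * (3 * real l * real (card F)) \<le> 3 * real (card J)"
    using F(2) unfolding cap by (simp add: algebra_simps)
  then have "4 * \<beta> * real (3 * l * card F) < 4 * \<beta> * real (card Y)" using many by simp
  then have "3 * (real l * real (card F)) < real (card Y)" using \<open>\<beta> > 0\<close> by simp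
  then have "real (3 * l * card F) < real (card Y)" by simp
  then have "3 * l * card F < card Y" by (simp only: of_nat_less_iff)
  then show "\<exists>F. F \<subseteq> M \<times> {..<2 * 2 ^ sched_e T} \<and> 3 * sched_l (card M) c * card F < card Y \<and>
      (\<forall>j\<in>Y. \<exists>p<length (fst j). (fst j ! p, \<omega> (sched_e T, s, j) + p) \<in> F)"
    using F(1) cover Y(1) unfinished hash_range s unfolding range_size_def hash_def l_def by blast
qed (use Y congestion in \<open>auto simp: range_size_def\<close>)

lemma good_hashes_complete_quarter:
  assumes "finite M" and "sched_l (card M) c \<ge> 1" and "S \<subseteq> lists M"
    and \<omega>: "\<omega> \<in> good_hashes M c b S" and J: "valid_jobs M c S J"
    and \<beta>: "\<beta> \<ge> 1" and T: "1 \<le> T" "T \<le> card M ^ c"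
    and JS: "good_subset M \<beta> T J JS" and run: "noisy_run M c b \<beta> T \<omega> J P"
  shows "card JS \<le> 4 * card {j\<in>JS. P (noisy_time (card M) c b \<beta> T) j = length (fst j)}"
proof (rule ccontr)
  interpret scheduler_run M c b \<beta> T \<omega> J P
    using run J \<open>S \<subseteq> lists M\<close> one_le_sched_l'[OF assms(2) \<beta>] unfolding valid_jobs_def
    by unfold_locales auto
  define C where "C = {j\<in>JS. P (calls * steps) j = length (fst j)}"
  assume "\<not> ?thesis"
  then have few: "4 * card C < card JS"
    unfolding C_def noisy_time_def calls_def steps_def by simp
  have JSJ: "JS \<subseteq> J" and JS_cd: "congestion M JS + dilation JS \<le> T"
    and J_JS: "real (card J) \<le> \<beta> * real (card JS)"
    using JS \<beta> unfolding good_subset_def by (auto simp: field_simps)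
  have fin: "finite J" "finite JS" using J JSJ finite_subset unfolding valid_jobs_def by auto
  have pool: "JS - C \<subseteq> job_pool M c S" using valid_jobs_subset_pool[OF J] JSJ by blast
  have range: "T \<le> range_size" "range_size < 2 * card M ^ c"
    using sched_e_bounds[OF T(1)] T(2) unfolding range_size_def by auto
  have "trapped M (sched_l (card M) c) calls (sched_e T) (\<lambda>s j. \<omega> (sched_e T, s, j)) (JS - C)"
  proof (rule unfinished_trapped[OF assms(1)])
    have "C \<subseteq> JS" unfolding C_def by blast
    then show "JS - C \<noteq> {}" "3 * real (card J) < 4 * \<beta> * real (card (JS - C))"
      using three_quarters_remaining[OF fin(2) _ few J_JS \<beta>] by blast+
    show "JS - C \<subseteq> J" using JSJ by blast
    show "\<forall>m\<in>M. (\<Sum>j\<in>JS - C. count_list (fst j) m) \<le> range_size"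
    proof
      fix m assume "m \<in> M"
      then have "(\<Sum>j\<in>JS - C. count_list (fst j) m) \<le> congestion M JS"
        by (intro sum_count_list_le_congestion[OF assms(1) fin(2)]) auto
      then show "(\<Sum>j\<in>JS - C. count_list (fst j) m) \<le> range_size" using JS_cd range(1) by linarith
    qed
    show "\<forall>j\<in>JS - C. P (calls * steps) j \<noteq> length (fst j) \<and> length (fst j) \<le> range_size"
      using length_le_dilation[OF fin(2)] JS_cd range(1) unfolding C_def by fastforce
    show "\<forall>s<calls. \<forall>j\<in>JS - C. hash s j < range_size"
      using \<omega> range(2) pool unfolding good_hashes_def hash_def range_size_def calls_def by blast
  qed
  then show False
    using \<omega> range(2) pool unfolding good_hashes_def range_size_def calls_def by blast
qed

section \<open>The probability space of hash functions\<close>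

definition hash_coord :: "nat \<times> nat \<times> job \<Rightarrow> nat measure" where
  "hash_coord = (\<lambda>(e, i, x). measure_pmf (pmf_of_set {0..<(2::nat) ^ e}))"

lemma rand_space_eq_PiM: "rand_space = PiM UNIV hash_coord"
  unfolding rand_space_def hash_coord_def ..

lemma prob_space_hash_coord: "prob_space (hash_coord z)"
  unfolding hash_coord_def by (auto split: prod.splits intro: prob_space_measure_pmf)

lemma sets_hash_coord [simp]: "sets (hash_coord z) = UNIV"
  and space_hash_coord [simp]: "space (hash_coord z) = UNIV"
  unfolding hash_coord_def by (auto split: prod.splits)

lemma measure_hash_coord: "measure (hash_coord (e, i, x)) A = real (card ({0..<2 ^ e} \<inter> A)) / 2 ^ e"
  unfolding hash_coord_def using measure_pmf_of_set[of "{0..<(2::nat) ^ e}" A] by simp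

lemma prob_space_rand_space: "prob_space rand_space"
  unfolding rand_space_eq_PiM by (rule prob_space_PiM) (rule prob_space_hash_coord)

lemma space_rand_space [simp]: "space rand_space = UNIV"
  unfolding rand_space_eq_PiM by (simp add: space_PiM)

definition cylinder :: "(nat \<times> nat \<times> job) set \<Rightarrow> (nat \<times> nat \<times> job \<Rightarrow> nat set) \<Rightarrow> rstring set" where
  "cylinder Z F = {\<omega>. \<forall>z\<in>Z. \<omega> z \<in> F z}"

lemma cylinder_eq_prod_emb: "cylinder Z F = prod_emb UNIV hash_coord Z (PiE Z F)"
  unfolding cylinder_def prod_emb_def by (auto simp: space_PiM)

lemma cylinder_in_sets: "finite Z \<Longrightarrow> cylinder Z F \<in> sets rand_space"
  unfolding cylinder_eq_prod_emb rand_space_eq_PiM by (rule sets_PiM_I) auto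

lemma measure_cylinder:
  assumes "finite Z"
  shows "measure rand_space (cylinder Z F) = (\<Prod>z\<in>Z. measure (hash_coord z) (F z))"
proof -
  have "emeasure rand_space (cylinder Z F) = (\<Prod>z\<in>Z. emeasure (hash_coord z) (F z))"
    unfolding cylinder_eq_prod_emb rand_space_eq_PiM
    by (rule emeasure_PiM_emb) (use assms prob_space_hash_coord in auto)
  also have "\<dots> = (\<Prod>z\<in>Z. ennreal (measure (hash_coord z) (F z)))"
    by (intro prod.cong refl finite_measure.emeasure_eq_measure prob_space.finite_measure prob_space_hash_coord)
  also have "\<dots> = ennreal (\<Prod>z\<in>Z. measure (hash_coord z) (F z))" by (rule prod_ennreal) simp
  finally show ?thesis unfolding measure_def by (simp add: prod_nonneg)
qed

lemma sets_rand_space_if_finitely_determined: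
  assumes "finite X" and determined: "\<And>\<omega> \<omega>'. \<omega> \<in> A \<Longrightarrow> (\<forall>z\<in>X. \<omega>' z = \<omega> z) \<Longrightarrow> \<omega>' \<in> A"
  shows "A \<in> sets rand_space"
proof -
  have A_eq: "A = (\<Union>v\<in>(\<lambda>\<omega>. restrict \<omega> X) ` A. cylinder X (\<lambda>z. {v z}))"
    using determined unfolding cylinder_def by fastforce
  have "(\<lambda>\<omega>. restrict \<omega> X) ` A \<subseteq> PiE X (\<lambda>_. UNIV)" by auto
  then have "countable ((\<lambda>\<omega>. restrict \<omega> X) ` A)"
    using countable_PiE[of X "\<lambda>_. UNIV :: nat set"] assms(1) countable_subset by auto
  then show ?thesis
    by (subst A_eq) (intro sets.countable_UN' cylinder_in_sets assms(1); auto intro: cylinder_in_sets[OF assms(1)])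
qed

lemma count_list_eq_card: "count_list xs x = card {p. p < length xs \<and> xs ! p = x}"
  unfolding count_list_eq_length_filter length_filter_conv_card by (metis (full_types))

lemma prod_le_mean_power:
  fixes x :: "'a \<Rightarrow> real"
  assumes "finite S" "S \<noteq> {}" "\<And>i. i \<in> S \<Longrightarrow> x i \<ge> 0"
  shows "(\<Prod>i\<in>S. x i) \<le> ((\<Sum>i\<in>S. x i) / card S) ^ card S"
proof (cases "(\<Prod>i\<in>S. x i) = 0")
  case True
  have "0 \<le> ((\<Sum>i\<in>S. x i) / card S) ^ card S"
    by (intro zero_le_power divide_nonneg_nonneg sum_nonneg) (use assms in auto)
  then show ?thesis using True by simp
next
  case False
  have "(\<Prod>i\<in>S. x i) \<ge> 0" using assms by (simp add: prod_nonneg)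
  then have pos: "(\<Prod>i\<in>S. x i) > 0" using False by simp
  have "card S > 0" using assms by (simp add: card_gt_0_iff)
  then have "(\<Prod>i\<in>S. x i) = ((\<Prod>i\<in>S. x i) powr (1 / card S)) ^ card S"
    using pos by (simp add: powr_realpow[symmetric] powr_powr)
  also have "\<dots> \<le> ((\<Sum>i\<in>S. x i) / card S) ^ card S"
    using arith_geom_mean[OF assms] by (intro power_mono) (simp_all add: sum_divide_distrib)
  finally show ?thesis .
qed

lemma card_subsets_card_le:
  assumes "finite A"
  shows "card {F. F \<subseteq> A \<and> card F \<le> z} \<le> (card A + 1) ^ z"
proof -
  let ?codes = "PiE {..<z} (\<lambda>_. insert None (Some ` A))"
  define decode where "decode f = {a. Some a \<in> f ` {..<z}}" for f :: "nat \<Rightarrow> 'a option"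
  have "{F. F \<subseteq> A \<and> card F \<le> z} \<subseteq> decode ` ?codes"
  proof
    fix F assume F: "F \<in> {F. F \<subseteq> A \<and> card F \<le> z}"
    then have "finite F" using assms finite_subset by blast
    then obtain xs where xs: "set xs = F" "distinct xs" using finite_distinct_list by blast
    have length_xs: "length xs \<le> z" using F xs distinct_card by fastforce
    define f where "f = (\<lambda>i\<in>{..<z}. if i < length xs then Some (xs ! i) else None)"
    have "\<forall>i<length xs. xs ! i \<in> A" using F xs nth_mem by blast
    then have "f \<in> ?codes" unfolding f_def by auto
    moreover have "decode f = F"
    proof (intro set_eqI iffI)
      fix a assume "a \<in> decode f"
      then obtain i where "i < z" "f i = Some a" unfolding decode_def by auto
      then show "a \<in> F" unfolding f_def using xs by (auto split: if_splits simp: nth_mem)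
    next
      fix a assume "a \<in> F"
      then obtain i where "i < length xs" "xs ! i = a" using xs by (metis in_set_conv_nth)
      then show "a \<in> decode f"
        unfolding decode_def f_def using length_xs by (intro CollectI image_eqI[of _ _ i]) auto
    qed
    ultimately show "F \<in> decode ` ?codes" by blast
  qed
  then have "card {F. F \<subseteq> A \<and> card F \<le> z} \<le> card (decode ` ?codes)"
    by (rule card_mono[rotated]) (use assms in \<open>auto intro!: finite_PiE\<close>)
  also have "\<dots> \<le> card ?codes" by (rule card_image_le) (use assms in \<open>auto intro!: finite_PiE\<close>)
  also have "\<dots> = (card A + 1) ^ z" using assms by (simp add: card_PiE card_insert_if card_image)
  finally show ?thesis .
qed

definition hit_values :: "job \<Rightarrow> (nat \<times> nat) set \<Rightarrow> nat set" where
  "hit_values j F = {v. \<exists>p<length (fst j). (fst j ! p, v + p) \<in> F}"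

lemma card_hit_values_le:
  assumes "finite F"
  shows "card ({0..<L} \<inter> hit_values j F) \<le> (\<Sum>\<sigma>\<in>F. count_list (fst j) (fst \<sigma>))"
proof -
  have "{0..<L} \<inter> hit_values j F \<subseteq> (\<Union>\<sigma>\<in>F. (\<lambda>p. snd \<sigma> - p) ` {p. p < length (fst j) \<and> fst j ! p = fst \<sigma>})"
  proof
    fix v assume "v \<in> {0..<L} \<inter> hit_values j F"
    then obtain p where p: "p < length (fst j)" "(fst j ! p, v + p) \<in> F" unfolding hit_values_def by auto
    then show "v \<in> (\<Union>\<sigma>\<in>F. (\<lambda>p. snd \<sigma> - p) ` {p. p < length (fst j) \<and> fst j ! p = fst \<sigma>})"
      by (intro UN_I[OF p(2)]) (auto intro!: image_eqI[of _ _ p])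
  qed
  then have "card ({0..<L} \<inter> hit_values j F) \<le> card (\<Union>\<sigma>\<in>F. (\<lambda>p. snd \<sigma> - p) ` {p. p < length (fst j) \<and> fst j ! p = fst \<sigma>})"
    by (rule card_mono[rotated]) (use assms in auto)
  also have "\<dots> \<le> (\<Sum>\<sigma>\<in>F. card ((\<lambda>p. snd \<sigma> - p) ` {p. p < length (fst j) \<and> fst j ! p = fst \<sigma>}))"
    by (rule card_UN_le[OF assms])
  also have "\<dots> \<le> (\<Sum>\<sigma>\<in>F. count_list (fst j) (fst \<sigma>))"
    by (intro sum_mono) (simp add: count_list_eq_card card_image_le)
  finally show ?thesis .
qed

text \<open>The product is the probability that one call makes every job of \<open>Y\<close> hit \<open>F\<close>. By AM-GM it
  is largest when the at most \<open>card F * L\<close> hits are spread evenly over \<open>Y\<close>.\<close>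

lemma prod_hit_probability_le:
  assumes finY: "finite Y" and Yne: "Y \<noteq> {}" and cong: "\<forall>m\<in>M. (\<Sum>j\<in>Y. count_list (fst j) m) \<le> L"
    and L1: "L \<ge> 1" and FM: "F \<subseteq> M \<times> UNIV" and finF: "finite F"
    and small: "3 * l * card F < card Y" and l1: "l \<ge> 1"
  shows "(\<Prod>j\<in>Y. real (card ({0..<L} \<inter> hit_values j F)) / L) \<le> (1 / (3 * real l)) ^ card Y"
proof -
  define x where "x j = real (card ({0..<L} \<inter> hit_values j F))" for j
  have x0: "\<And>j. x j \<ge> 0" unfolding x_def by simp
  have "(\<Sum>j\<in>Y. x j) \<le> (\<Sum>j\<in>Y. real (\<Sum>\<sigma>\<in>F. count_list (fst j) (fst \<sigma>)))"
    unfolding x_def by (intro sum_mono) (metis card_hit_values_le[OF finF] of_nat_le_iff of_nat_sum)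
  also have "\<dots> = (\<Sum>\<sigma>\<in>F. real (\<Sum>j\<in>Y. count_list (fst j) (fst \<sigma>)))"
    by (simp add: sum.swap[of _ Y F])
  also have "\<dots> \<le> (\<Sum>\<sigma>\<in>F. real L)"
  proof (intro sum_mono)
    fix \<sigma> assume "\<sigma> \<in> F"
    then have "fst \<sigma> \<in> M" using FM by auto
    then have "(\<Sum>j\<in>Y. count_list (fst j) (fst \<sigma>)) \<le> L" using cong by blast
    then show "real (\<Sum>j\<in>Y. count_list (fst j) (fst \<sigma>)) \<le> real L" by linarith
  qed
  finally have sx: "(\<Sum>j\<in>Y. x j) \<le> real (card F) * real L" by simp
  have cY: "real (card Y) > 0" using finY Yne by (simp add: card_gt_0_iff)
  have "(\<Prod>j\<in>Y. x j) \<le> ((\<Sum>j\<in>Y. x j) / card Y) ^ card Y" by (rule prod_le_mean_power[OF finY Yne x0])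
  also have "\<dots> \<le> (real (card F) * real L / card Y) ^ card Y"
    by (rule power_mono) (use sx cY x0 in \<open>auto simp: divide_right_mono sum_nonneg\<close>)
  finally have pr: "(\<Prod>j\<in>Y. x j) \<le> (real (card F) * real L / card Y) ^ card Y" .
  have "(\<Prod>j\<in>Y. x j / L) = (\<Prod>j\<in>Y. x j) / real L ^ card Y" by (simp add: prod_dividef)
  also have "\<dots> \<le> (real (card F) * real L / card Y) ^ card Y / real L ^ card Y"
    by (rule divide_right_mono[OF pr]) simp
  also have "\<dots> = (real (card F) / card Y) ^ card Y" using L1 by (simp add: power_divide power_mult_distrib)
  also have "\<dots> \<le> (1 / (3 * real l)) ^ card Y"
  proof (rule power_mono)
    have "3 * real l * real (card F) < real (card Y)" using small by (metis of_nat_less_iff of_nat_mult of_nat_numeral)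
    moreover have "l > 0" using l1 by simp
    ultimately show "real (card F) / real (card Y) \<le> 1 / (3 * real l)" using cY
      by (simp add: field_simps)
  qed simp
  finally show ?thesis unfolding x_def .
qed

section \<open>The union bound\<close>

lemma trapped_cong:
  assumes "\<forall>s<K. \<forall>j\<in>Y. w s j = w' s j"
  shows "trapped M l K e w Y \<longleftrightarrow> trapped M l K e w' Y"
  using assms unfolding trapped_def by (simp cong: imp_cong)

lemma finite_job_pool: "finite S \<Longrightarrow> finite (job_pool M c S)"
  unfolding job_pool_def by simp

lemma finite_hash_exponents: "finite {e::nat. 2 ^ e < 2 * (n::nat)}"
proof (rule finite_subset)
  show "{e::nat. 2 ^ e < 2 * n} \<subseteq> {..<2 * n}" by (auto intro: less_trans[OF less_exp])
qed simp

lemma good_hashes_in_sets: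
  assumes "finite S"
  shows "good_hashes M c b S \<in> sets rand_space"
proof (rule sets_rand_space_if_finitely_determined)
  let ?E = "{e::nat. 2 ^ e < 2 * card M ^ c}"
  let ?X = "?E \<times> {..<sched_k (card M) c b} \<times> job_pool M c S"
  show "finite ?X" using finite_hash_exponents finite_job_pool[OF assms] by simp
  fix \<omega> \<omega>' assume \<omega>: "\<omega> \<in> good_hashes M c b S" and agree: "\<forall>z\<in>?X. \<omega>' z = \<omega> z"
  have trapped_iff: "trapped M (sched_l (card M) c) (sched_k (card M) c b) e (\<lambda>s j. \<omega>' (e, s, j)) Y \<longleftrightarrow>
      trapped M (sched_l (card M) c) (sched_k (card M) c b) e (\<lambda>s j. \<omega> (e, s, j)) Y"
    if "e \<in> ?E" "Y \<subseteq> job_pool M c S" for e Y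
  proof (rule trapped_cong)
    show "\<forall>s<sched_k (card M) c b. \<forall>j\<in>Y. \<omega>' (e, s, j) = \<omega> (e, s, j)"
      using that agree by blast
  qed
  show "\<omega>' \<in> good_hashes M c b S"
    unfolding good_hashes_def
  proof (intro CollectI allI impI conjI ballI notI)
    fix e s j assume "2 ^ e < 2 * card M ^ c" "s < sched_k (card M) c b" "j \<in> job_pool M c S"
    then show "\<omega>' (e, s, j) < 2 ^ e" using \<omega> agree unfolding good_hashes_def by auto
  next
    fix e assume e: "2 ^ e < 2 * card M ^ c" and "\<exists>Y\<subseteq>job_pool M c S.
      trapped M (sched_l (card M) c) (sched_k (card M) c b) e (\<lambda>s j. \<omega>' (e, s, j)) Y"
    then show False using \<omega> e trapped_iff[of e] unfolding good_hashes_def by blast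
  qed
qed

definition hash_out_of_range :: "nat \<Rightarrow> job set \<Rightarrow> nat \<Rightarrow> rstring set" where
  "hash_out_of_range K Y e = {\<omega>. \<exists>s<K. \<exists>j\<in>Y. 2 ^ e \<le> \<omega> (e, s, j)}"

definition trap_event :: "nat set \<Rightarrow> nat \<Rightarrow> nat \<Rightarrow> nat \<Rightarrow> job set \<Rightarrow> rstring set" where
  "trap_event M l K e Y = {\<omega>. trapped M l K e (\<lambda>s j. \<omega> (e, s, j)) Y}"

lemma not_good_hashes_subset:
  "UNIV - good_hashes M c b S \<subseteq> (\<Union>e\<in>{e. 2 ^ e < 2 * card M ^ c}.
    hash_out_of_range (sched_k (card M) c b) (job_pool M c S) e \<union>
    (\<Union>Y\<in>{Y. Y \<subseteq> job_pool M c S \<and> Y \<noteq> {}}. trap_event M (sched_l (card M) c) (sched_k (card M) c b) e Y))"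
proof
  fix \<omega> assume "\<omega> \<in> UNIV - good_hashes M c b S"
  then obtain e where "2 ^ e < 2 * card M ^ c" and
    "\<omega> \<in> hash_out_of_range (sched_k (card M) c b) (job_pool M c S) e \<or>
     (\<exists>Y\<subseteq>job_pool M c S. trapped M (sched_l (card M) c) (sched_k (card M) c b) e (\<lambda>s j. \<omega> (e, s, j)) Y)"
    unfolding good_hashes_def hash_out_of_range_def by (auto simp: not_less)
  then show "\<omega> \<in> (\<Union>e\<in>{e. 2 ^ e < 2 * card M ^ c}.
    hash_out_of_range (sched_k (card M) c b) (job_pool M c S) e \<union>
    (\<Union>Y\<in>{Y. Y \<subseteq> job_pool M c S \<and> Y \<noteq> {}}. trap_event M (sched_l (card M) c) (sched_k (card M) c b) e Y))"
    unfolding trap_event_def trapped_def by blast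
qed

lemma hash_out_of_range_in_sets: "finite Y \<Longrightarrow> hash_out_of_range K Y e \<in> sets rand_space"
  unfolding hash_out_of_range_def
  by (intro sets_rand_space_if_finitely_determined[of "{e} \<times> {..<K} \<times> Y"]) (auto, metis lessThan_iff)

lemma trap_event_in_sets:
  assumes "finite Y"
  shows "trap_event M l K e Y \<in> sets rand_space"
  unfolding trap_event_def
proof (rule sets_rand_space_if_finitely_determined)
  show "finite ({e} \<times> {..<K} \<times> Y)" using assms by simp
  fix \<omega> \<omega>' assume "\<omega> \<in> {\<omega>. trapped M l K e (\<lambda>s j. \<omega> (e, s, j)) Y}"
    and "\<forall>z\<in>{e} \<times> {..<K} \<times> Y. \<omega>' z = \<omega> z"
  then show "\<omega>' \<in> {\<omega>. trapped M l K e (\<lambda>s j. \<omega> (e, s, j)) Y}"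
    using trapped_cong[of K Y "\<lambda>s j. \<omega>' (e, s, j)" "\<lambda>s j. \<omega> (e, s, j)"] by auto
qed

lemma measure_hash_out_of_range:
  assumes "finite Y"
  shows "measure rand_space (hash_out_of_range K Y e) = 0"
proof -
  have eq: "hash_out_of_range K Y e = (\<Union>z\<in>{e} \<times> {..<K} \<times> Y. cylinder {z} (\<lambda>_. {2 ^ e..}))"
    unfolding hash_out_of_range_def cylinder_def by auto
  have "measure rand_space (cylinder {z} (\<lambda>_. {2 ^ e..})) = 0" if "z \<in> {e} \<times> {..<K} \<times> Y" for z
    using that by (auto simp: measure_cylinder measure_hash_coord)
  then have "measure rand_space (\<Union>z\<in>{e} \<times> {..<K} \<times> Y. cylinder {z} (\<lambda>_. {2 ^ e..})) \<le> 0"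
    using measure_UNION_le[of "{e} \<times> {..<K} \<times> Y" "\<lambda>z. cylinder {z} (\<lambda>_. {2 ^ e..})" rand_space]
      assms cylinder_in_sets by simp
  then show ?thesis unfolding eq by (simp add: measure_le_0_iff)
qed

lemma measure_Un_UNION_le:
  assumes "A \<in> sets N" "finite I" "\<And>i. i \<in> I \<Longrightarrow> B i \<in> sets N"
  shows "measure N (A \<union> (\<Union>i\<in>I. B i)) \<le> measure N A + (\<Sum>i\<in>I. measure N (B i))"
proof -
  have "(\<Union>i\<in>I. B i) \<in> sets N" using assms(2,3) by (intro sets.finite_UN) auto
  then show ?thesis
    using measure_Un_le[OF assms(1), of "\<Union>i\<in>I. B i"] measure_UNION_le[of I B N, OF assms(2,3)]
    by linarith
qed

lemma sum_power_card_nonempty_subsets: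
  fixes r :: real
  assumes "finite A"
  shows "(\<Sum>Y\<in>{Y. Y \<subseteq> A \<and> Y \<noteq> {}}. r ^ card Y) = (1 + r) ^ card A - 1"
proof -
  have "(1 + r) ^ card A = (\<Sum>Y\<in>Pow A. r ^ card Y)"
    using prod_add[OF assms, of "\<lambda>_. r" "\<lambda>_. 1"] by (simp add: add.commute)
  also have "\<dots> = 1 + (\<Sum>Y\<in>Pow A - {{}}. r ^ card Y)"
    using sum.remove[of "Pow A" "{}" "\<lambda>Y. r ^ card Y"] assms by simp
  also have "Pow A - {{}} = {Y. Y \<subseteq> A \<and> Y \<noteq> {}}" by auto
  finally show ?thesis by simp
qed

lemma prod_Sigma_singleton:
  "finite B \<Longrightarrow> finite Y \<Longrightarrow> (\<Prod>z\<in>{e} \<times> B \<times> Y. f z) = (\<Prod>s\<in>B. \<Prod>j\<in>Y. f (e, s, j))"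
proof -
  assume "finite B" "finite Y"
  have "{e} \<times> B \<times> Y = Pair e ` (B \<times> Y)" by auto
  then have "(\<Prod>z\<in>{e} \<times> B \<times> Y. f z) = (\<Prod>x\<in>B \<times> Y. f (e, x))"
    by (simp add: prod.reindex inj_on_def)
  also have "\<dots> = (\<Prod>s\<in>B. \<Prod>j\<in>Y. f (e, s, j))" by (simp add: prod.cartesian_product)
  finally show ?thesis .
qed

definition slot_sets :: "nat set \<Rightarrow> nat \<Rightarrow> nat \<Rightarrow> nat \<Rightarrow> (nat \<times> nat) set set" where
  "slot_sets M l e y = {F. F \<subseteq> M \<times> {..<2 * 2 ^ e} \<and> 3 * l * card F < y}"

lemma finite_slot_sets: "finite M \<Longrightarrow> finite (slot_sets M l e y)"
  unfolding slot_sets_def by (rule finite_subset[of _ "Pow (M \<times> {..<2 * 2 ^ e})"]) auto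

lemma card_slot_sets_le:
  assumes "finite M" "l \<ge> 1"
  shows "card (slot_sets M l e y) \<le> (card M * (2 * 2 ^ e) + 1) ^ ((y - 1) div (3 * l))"
proof -
  have "card F \<le> (y - 1) div (3 * l)" if "3 * l * card F < y" for F :: "(nat \<times> nat) set"
  proof -
    have "card F = (3 * l * card F) div (3 * l)" using assms(2) by simp
    also have "\<dots> \<le> (y - 1) div (3 * l)" using that by (intro div_le_mono) simp
    finally show ?thesis .
  qed
  then have "slot_sets M l e y \<subseteq> {F. F \<subseteq> M \<times> {..<2 * 2 ^ e :: nat} \<and> card F \<le> (y - 1) div (3 * l)}"
    unfolding slot_sets_def by auto
  then have "card (slot_sets M l e y) \<le> card {F. F \<subseteq> M \<times> {..<2 * 2 ^ e :: nat} \<and> card F \<le> (y - 1) div (3 * l)}"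
    using assms(1) by (intro card_mono) (auto intro: finite_subset[of _ "Pow (M \<times> {..<2 * 2 ^ e})"])
  also have "\<dots> \<le> (card (M \<times> {..<2 * 2 ^ e :: nat}) + 1) ^ ((y - 1) div (3 * l))"
    using assms(1) by (intro card_subsets_card_le) simp
  finally show ?thesis by (simp add: card_cartesian_product)
qed

lemma trapped_in_cylinders:
  assumes "trapped M l K e (\<lambda>s j. \<omega> (e, s, j)) Y"
  shows "\<omega> \<in> (\<Union>Fv\<in>PiE {..<K} (\<lambda>_. slot_sets M l e (card Y)).
    cylinder ({e} \<times> {..<K} \<times> Y) (\<lambda>(_, s, j). hit_values j (Fv s)))"
proof -
  have "\<forall>s<K. \<exists>F. F \<in> slot_sets M l e (card Y) \<and>
      (\<forall>j\<in>Y. \<exists>p<length (fst j). (fst j ! p, \<omega> (e, s, j) + p) \<in> F)"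
    using assms unfolding trapped_def slot_sets_def by auto
  then obtain Fv where Fv: "\<forall>s<K. Fv s \<in> slot_sets M l e (card Y) \<and>
      (\<forall>j\<in>Y. \<exists>p<length (fst j). (fst j ! p, \<omega> (e, s, j) + p) \<in> Fv s)"
    by metis
  then have "restrict Fv {..<K} \<in> PiE {..<K} (\<lambda>_. slot_sets M l e (card Y))" by auto
  moreover have "\<omega> \<in> cylinder ({e} \<times> {..<K} \<times> Y) (\<lambda>(_, s, j). hit_values j (restrict Fv {..<K} s))"
    using Fv unfolding cylinder_def hit_values_def by auto
  ultimately show ?thesis by blast
qed

lemma measure_trapped_le:
  assumes "finite M" "l \<ge> 1" "finite Y"
  shows "measure rand_space (trap_event M l K e Y)
    \<le> (real (card (slot_sets M l e (card Y))) * (1 / (3 * real l)) ^ card Y) ^ K"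
proof (cases "Y \<noteq> {} \<and> (\<forall>m\<in>M. (\<Sum>j\<in>Y. count_list (fst j) m) \<le> 2 ^ e)")
  case False
  then have "trap_event M l K e Y = {}" unfolding trap_event_def trapped_def by auto
  then show ?thesis by simp
next
  case True
  let ?slots = "slot_sets M l e (card Y)"
  let ?cyl = "\<lambda>Fv. cylinder ({e} \<times> {..<K} \<times> Y) (\<lambda>(_, s, j). hit_values j (Fv s))"
  define G where "G F = (\<Prod>j\<in>Y. real (card ({0..<2 ^ e} \<inter> hit_values j F)) / 2 ^ e)" for F
  interpret prob_space rand_space by (rule prob_space_rand_space)
  have finite_slots: "finite ?slots" using finite_slot_sets[OF assms(1)] .
  have cyl_sets: "?cyl Fv \<in> sets rand_space" for Fv using assms(3) by (intro cylinder_in_sets) simp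
  have measure_cyl: "measure rand_space (?cyl Fv) = (\<Prod>s<K. G (Fv s))" for Fv
    unfolding G_def using assms(3)
    by (simp add: measure_cylinder prod_Sigma_singleton measure_hash_coord)
  have G_le: "G F \<le> (1 / (3 * real l)) ^ card Y" if "F \<in> ?slots" for F
  proof -
    have "finite F" using that assms(1) unfolding slot_sets_def by (auto intro: finite_subset)
    then show ?thesis unfolding G_def
      using prod_hit_probability_le[OF assms(3), of M "2 ^ e" F l] True that assms(2)
      unfolding slot_sets_def by auto
  qed
  have "measure rand_space (trap_event M l K e Y)
      \<le> measure rand_space (\<Union>Fv\<in>PiE {..<K} (\<lambda>_. ?slots). ?cyl Fv)"
    using trapped_in_cylinders finite_slots cyl_sets unfolding trap_event_def
    by (intro finite_measure_mono) (auto intro!: sets.finite_UN finite_PiE)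
  also have "\<dots> \<le> (\<Sum>Fv\<in>PiE {..<K} (\<lambda>_. ?slots). measure rand_space (?cyl Fv))"
    using finite_slots cyl_sets by (intro measure_UNION_le) (auto intro: finite_PiE)
  also have "\<dots> = (\<Prod>s<K. \<Sum>F\<in>?slots. G F)"
    unfolding measure_cyl using finite_slots by (intro prod_sum_PiE[symmetric]) auto
  also have "\<dots> \<le> (real (card ?slots) * (1 / (3 * real l)) ^ card Y) ^ K"
    using sum_mono[OF G_le, of ?slots] by (simp add: G_def sum_nonneg prod_nonneg power_mono)
  finally show ?thesis .
qed

lemma measure_bad_exponent_le:
  fixes q :: real
  assumes "finite M" "l \<ge> 1" "finite pool"
    and slots: "\<And>y. real (card (slot_sets M l e y)) * (1 / (3 * real l)) ^ y \<le> q ^ y"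
  shows "measure rand_space (hash_out_of_range K pool e \<union>
      (\<Union>Y\<in>{Y. Y \<subseteq> pool \<and> Y \<noteq> {}}. trap_event M l K e Y)) \<le> (1 + q ^ K) ^ card pool - 1"
proof -
  define subsets where "subsets = {Y. Y \<subseteq> pool \<and> Y \<noteq> {}}"
  have finite_subsets: "finite subsets"
    using assms(3) unfolding subsets_def by (auto intro: finite_subset[of _ "Pow pool"])
  have finite_Y: "finite Y" if "Y \<in> subsets" for Y
    using that assms(3) finite_subset unfolding subsets_def by blast
  have trap_le: "measure rand_space (trap_event M l K e Y) \<le> (q ^ K) ^ card Y" if "Y \<in> subsets" for Y
  proof -
    have "measure rand_space (trap_event M l K e Y)
        \<le> (real (card (slot_sets M l e (card Y))) * (1 / (3 * real l)) ^ card Y) ^ K"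
      by (rule measure_trapped_le[OF assms(1,2) finite_Y[OF that]])
    also have "\<dots> \<le> (q ^ card Y) ^ K" by (intro power_mono slots) simp
    finally show ?thesis by (simp add: power_mult[symmetric] mult.commute)
  qed
  have "measure rand_space (hash_out_of_range K pool e \<union> (\<Union>Y\<in>subsets. trap_event M l K e Y))
      \<le> measure rand_space (hash_out_of_range K pool e) + (\<Sum>Y\<in>subsets. measure rand_space (trap_event M l K e Y))"
    by (intro measure_Un_UNION_le hash_out_of_range_in_sets trap_event_in_sets assms(3) finite_subsets finite_Y)
  also have "\<dots> \<le> (\<Sum>Y\<in>subsets. (q ^ K) ^ card Y)"
    using measure_hash_out_of_range[OF assms(3)] trap_le by (simp add: sum_mono)
  also have "\<dots> = (1 + q ^ K) ^ card pool - 1"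
    unfolding subsets_def by (rule sum_power_card_nonempty_subsets[OF assms(3)])
  finally show ?thesis unfolding subsets_def .
qed

lemma measure_not_good_hashes_le:
  fixes M :: "nat set" and c :: nat and b q :: real and S :: "nat list set"
  defines "l \<equiv> sched_l (card M) c" and "K \<equiv> sched_k (card M) c b" and "E \<equiv> {e::nat. 2 ^ e < 2 * card M ^ c}"
  assumes "finite M" "finite S" "l \<ge> 1"
    and slots: "\<And>e y. e \<in> E \<Longrightarrow> real (card (slot_sets M l e y)) * (1 / (3 * real l)) ^ y \<le> q ^ y"
  shows "measure rand_space (UNIV - good_hashes M c b S) \<le>
    real (card E) * ((1 + q ^ K) ^ card (job_pool M c S) - 1)"
proof -
  interpret prob_space rand_space by (rule prob_space_rand_space)
  define pool where "pool = job_pool M c S"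
  define bad where "bad e = hash_out_of_range K pool e \<union>
    (\<Union>Y\<in>{Y. Y \<subseteq> pool \<and> Y \<noteq> {}}. trap_event M l K e Y)" for e
  have finite_pool: "finite pool" unfolding pool_def using finite_job_pool[OF assms(5)] .
  then have bad_sets: "bad e \<in> sets rand_space" for e
    unfolding bad_def
    by (intro sets.Un sets.finite_UN hash_out_of_range_in_sets trap_event_in_sets)
      (auto intro: finite_subset[of _ "Pow pool"] finite_subset[of _ pool])
  have "measure rand_space (UNIV - good_hashes M c b S) \<le> measure rand_space (\<Union>e\<in>E. bad e)"
    using not_good_hashes_subset[of M c b S] bad_sets finite_hash_exponents
    unfolding bad_def E_def K_def l_def pool_def by (intro finite_measure_mono) auto
  also have "\<dots> \<le> (\<Sum>e\<in>E. measure rand_space (bad e))"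
    using bad_sets finite_hash_exponents unfolding E_def by (intro measure_UNION_le) auto
  also have "\<dots> \<le> (\<Sum>e\<in>E. (1 + q ^ K) ^ card pool - 1)"
    unfolding bad_def using measure_bad_exponent_le[OF assms(4,6) finite_pool] slots
    by (intro sum_mono) blast
  finally show ?thesis unfolding pool_def by simp
qed

section \<open>Parameter estimates\<close>

lemma sched_l_bounds:
  fixes n c l :: nat and x :: real
  assumes n: "n \<ge> 32" and c: "c \<ge> 1"
  defines "x \<equiv> ln (real n)" and "l \<equiv> sched_l n c"
  shows "x \<ge> 3" "ln x \<ge> 1" "ln (real l) \<ge> ln x / 2" "real l \<le> 151 * c * x" "l \<ge> 1"
    "real l * ln (real l) \<ge> 75 * c * x"
proof -
  have "exp (3::real) \<le> 27"
    using exp_of_nat_mult[of 3 "1::real"] power_mono[OF exp_le, of 3] by simp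
  then show x3: "x \<ge> 3" unfolding x_def using n by (subst ln_ge_iff) auto
  then show lnx: "ln x \<ge> 1" using exp_le by (subst ln_ge_iff) auto
  have x0: "x > 0" using x3 by simp
  have "150 * real c * x / ln x \<ge> 0" using x3 lnx by simp
  then have l_eq: "real l = of_int \<lceil>150 * real c * x / ln x\<rceil>"
    unfolding l_def sched_l_def x_def by simp
  have lower: "real l \<ge> 150 * c * x / ln x" using l_eq le_of_int_ceiling by simp
  have "150 * real c * x / ln x \<le> 150 * real c * x"
    using divide_left_mono[of 1 "ln x" "150 * real c * x"] x3 lnx by simp
  moreover have "1 \<le> real c * x" using c x3 mult_mono[of 1 "real c" 1 x] by simp
  ultimately show "real l \<le> 151 * c * x"
    using l_eq ceiling_correct[of "150 * real c * x / ln x"] by linarith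
  have "ln x = 2 * ln (sqrt x)" using x0 by (simp add: ln_sqrt)
  also have "\<dots> \<le> 2 * sqrt x" using ln_le_minus_one[of "sqrt x"] x0 by simp
  finally have "150 * x / (2 * sqrt x) \<le> 150 * real c * x / ln x"
    using lnx x3 c by (intro frac_le) (auto intro: mult_right_mono)
  moreover have "150 * x / (2 * sqrt x) = 75 * sqrt x"
    using x0 by (simp add: field_simps real_sqrt_mult[symmetric])
  ultimately have l_sqrt: "real l \<ge> sqrt x" using lower x0 by simp
  then have "ln (real l) \<ge> ln (sqrt x)" using x0 by (intro ln_mono) auto
  then show ln_l: "ln (real l) \<ge> ln x / 2" using x0 by (simp add: ln_sqrt)
  have "sqrt x \<ge> 1" using x3 by simp
  then show "l \<ge> 1" using l_sqrt by linarith
  have "real l * ln (real l) \<ge> (150 * c * x / ln x) * (ln x / 2)"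
    by (rule mult_mono[OF lower ln_l]) (use x0 x3 lnx l_sqrt in auto)
  also have "(150 * c * x / ln x) * (ln x / 2) = 75 * c * x" using lnx by (simp add: field_simps)
  finally show "real l * ln (real l) \<ge> 75 * c * x" .
qed

lemma slot_rate_le:
  fixes n c :: nat
  assumes n: "n \<ge> 32" and c: "c \<ge> 1"
  defines "l \<equiv> sched_l n c"
  shows "real n powr ((real c + 2) / (3 * real l)) / (3 * real l) \<le> exp (- (ln (real l) / 2))"
proof -
  define x where "x = ln (real n)"
  note P = sched_l_bounds[OF n c, folded x_def l_def]
  have l1: "real l \<ge> 1" using P(5) by simp
  have "(real c + 2) * x \<le> 3 * real c * x" using c P(1) by (simp add: mult_right_mono)
  also have "\<dots> \<le> 3 * real l * (ln (real l) / 2)"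
  proof -
    have "0 \<le> real c * x" using P(1) by simp
    then have "3 * (real c * x) \<le> real l * ln (real l) * 3 / 2" using P(6) by linarith
    then show ?thesis by (simp add: algebra_simps)
  qed
  finally have exponent: "(real c + 2) / (3 * real l) * x \<le> ln (real l) / 2"
    using l1 by (simp add: field_simps)
  have "real n powr ((real c + 2) / (3 * real l)) / (3 * real l)
      = exp ((real c + 2) / (3 * real l) * x) / (3 * real l)"
    unfolding x_def powr_def using n by simp
  also have "\<dots> \<le> exp (ln (real l) / 2) / real l"
    using exponent l1 by (intro frac_le) auto
  also have "\<dots> = exp (- (ln (real l) / 2))"
    using l1 exp_add[of "- (ln (real l) / 2)" "ln (real l)"] by (simp add: field_simps)
  finally show ?thesis .
qed

lemma sched_k_mult_ln_ge:
  fixes n c :: nat and b :: real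
  assumes "n \<ge> 32" "c \<ge> 1"
  shows "4 * ((b + 1) * (2 * real c + 1) * ln (real n)) \<le> real (sched_k n c b) * ln (real (sched_l n c)) / 2"
proof -
  define v where "v = 8 * (b + 1) * (2 * real c + 1) * ln (real n) / ln (real (sched_l n c))"
  have "ln (real (sched_l n c)) > 0" using sched_l_bounds(2,3)[OF assms] by linarith
  moreover have "v \<le> real (sched_k n c b)"
    unfolding sched_k_def v_def[symmetric] using le_of_int_ceiling[of v] by (cases "\<lceil>v\<rceil> \<ge> 0") auto
  ultimately have "8 * (b + 1) * (2 * real c + 1) * ln (real n) \<le> real (sched_k n c b) * ln (real (sched_l n c))"
    unfolding v_def by (simp add: divide_le_eq)
  moreover have "8 * (b + 1) * (2 * real c + 1) * ln (real n) = 8 * ((b + 1) * (2 * real c + 1) * ln (real n))"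
    by (simp only: mult.assoc)
  ultimately show ?thesis by linarith
qed

lemma pow_sched_k_le:
  fixes n c :: nat and b :: real
  assumes "n \<ge> 32" "c \<ge> 1"
  defines "l \<equiv> sched_l n c"
  shows "(real n powr ((real c + 2) / (3 * real l)) / (3 * real l)) ^ sched_k n c b
    \<le> real n powr (- (4 * (b + 1) * (2 * real c + 1)))"
proof -
  have "(real n powr ((real c + 2) / (3 * real l)) / (3 * real l)) ^ sched_k n c b
      \<le> exp (- (ln (real l) / 2)) ^ sched_k n c b"
    unfolding l_def by (intro power_mono slot_rate_le assms) simp
  also have "\<dots> = exp (- (real (sched_k n c b) * ln (real l)) / 2)"
    by (simp add: exp_of_nat_mult[symmetric])
  also have "\<dots> \<le> exp (- (4 * ((b + 1) * (2 * real c + 1) * ln (real n))))"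
    using sched_k_mult_ln_ge[OF assms(1,2), of b] unfolding l_def by simp
  also have "\<dots> = real n powr (- (4 * (b + 1) * (2 * real c + 1)))"
    unfolding powr_def using assms(1) by (simp add: algebra_simps)
  finally show ?thesis .
qed

lemma slot_sets_probability_le:
  fixes M :: "nat set" and c l e y :: nat
  assumes "finite M" "card M \<ge> 4" "l \<ge> 1" "2 ^ e < 2 * card M ^ c"
  shows "real (card (slot_sets M l e y)) * (1 / (3 * real l)) ^ y
    \<le> (real (card M) powr ((real c + 2) / (3 * real l)) / (3 * real l)) ^ y"
proof -
  define n where "n = card M"
  define z where "z = (y - 1) div (3 * l)"
  have "n * (2 * 2 ^ e) + n \<le> n * (4 * n ^ c)"
    using mult_le_mono2[of "2 * 2 ^ e + 1" "4 * n ^ c" n] assms(4) unfolding n_def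
    by (simp add: distrib_left)
  also have "\<dots> \<le> n * (n * n ^ c)" using assms(2) unfolding n_def by simp
  finally have slots: "n * (2 * 2 ^ e) + 1 \<le> n ^ (c + 2)"
    using assms(2) unfolding n_def by (simp add: power_add power2_eq_square)
  have "3 * l * z \<le> y" unfolding z_def using times_div_less_eq_dividend[of "3 * l" "y - 1"] by linarith
  then have "3 * real l * real z \<le> real y" by (metis of_nat_le_iff of_nat_mult of_nat_numeral)
  then have z: "real z \<le> real y / (3 * real l)" using assms(3) by (simp add: field_simps)
  have "card (slot_sets M l e y) \<le> (n ^ (c + 2)) ^ z"
    using card_slot_sets_le[OF assms(1,3), of e y] power_mono[OF slots, of z]
    unfolding n_def z_def by linarith
  then have "real (card (slot_sets M l e y)) \<le> real ((n ^ (c + 2)) ^ z)" by (simp only: of_nat_le_iff)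
  also have "\<dots> = real n ^ ((c + 2) * z)" by (simp only: of_nat_power power_mult)
  also have "\<dots> = real n powr ((real c + 2) * real z)"
    using assms(2) unfolding n_def by (simp add: powr_realpow[symmetric] algebra_simps)
  also have "\<dots> \<le> real n powr ((real c + 2) * (real y / (3 * real l)))"
    using assms(2) z unfolding n_def by (intro powr_mono mult_left_mono) auto
  also have "\<dots> = real n powr (real y * ((real c + 2) / (3 * real l)))" by (simp add: mult.commute)
  also have "\<dots> = (real n powr ((real c + 2) / (3 * real l))) ^ y"
    using assms(2) unfolding n_def by (intro powr_power[symmetric]) simp
  finally have "real (card (slot_sets M l e y)) * (1 / (3 * real l)) ^ y
      \<le> (real n powr ((real c + 2) / (3 * real l))) ^ y * (1 / (3 * real l)) ^ y"
    by (rule mult_right_mono) simp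
  then show ?thesis unfolding n_def by (simp add: power_divide)
qed

lemma one_plus_pow_minus_one_le:
  fixes r :: real
  assumes "r \<ge> 0" "real N * r \<le> 1 / 2"
  shows "(1 + r) ^ N - 1 \<le> 2 * real N * r"
proof -
  have "(1 + r) ^ N \<le> exp r ^ N" using assms(1) by (intro power_mono) auto
  also have "\<dots> = exp (real N * r)" by (rule exp_of_nat_mult[symmetric])
  also have "\<dots> \<le> 1 + 2 * (real N * r)" using assms by (intro real_exp_bound_lemma) auto
  finally show ?thesis by simp
qed

lemma union_bound_le_powr:
  fixes n N E c :: nat and r R b' :: real
  assumes n: "n \<ge> 4" and E: "E \<le> 2 * n ^ c" and N: "N \<le> n ^ (2 * c)"
    and r: "0 \<le> r" "r \<le> real n powr (- R)"
    and R: "2 * real c + 1 \<le> R" "3 * real c + b' + 1 \<le> R"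
  shows "real E * ((1 + r) ^ N - 1) \<le> real n powr (- b')"
proof -
  have n_pow: "real n ^ k = real n powr real k" for k using n by (simp add: powr_realpow)
  have "real N * r \<le> real n ^ (2 * c) * real n powr (- R)"
    using N r by (intro mult_mono) (auto simp flip: of_nat_power)
  also have "\<dots> = real n powr (2 * real c - R)" by (simp add: n_pow powr_add[symmetric])
  finally have Nr: "real N * r \<le> real n powr (2 * real c - R)" .
  have "real n powr (2 * real c - R) \<le> real n powr (-1)" using n R(1) by (intro powr_mono) auto
  also have "\<dots> \<le> 1 / 2" using n by (simp add: powr_minus_divide)
  finally have "(1 + r) ^ N - 1 \<le> 2 * real n powr (2 * real c - R)"
    using one_plus_pow_minus_one_le[OF r(1), of N] Nr by linarith
  then have "real E * ((1 + r) ^ N - 1) \<le> (2 * real n ^ c) * (2 * real n powr (2 * real c - R))"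
    using E r(1) by (intro mult_mono) (auto simp flip: of_nat_power)
  also have "\<dots> = 4 * real n powr (3 * real c - R)" by (simp add: n_pow powr_add[symmetric])
  also have "\<dots> \<le> real n * real n powr (3 * real c - R)" using n by (intro mult_right_mono) auto
  also have "\<dots> = real n powr (1 + (3 * real c - R))" using n by (simp add: powr_add)
  also have "\<dots> \<le> real n powr (- b')" using n R(2) by (intro powr_mono) auto
  finally show ?thesis .
qed

lemma sched_k_le:
  fixes n c :: nat and b :: real
  assumes n: "n \<ge> 32" and c: "c \<ge> 1" and b: "b \<ge> 0"
  shows "real (sched_k n c b) \<le> (16 * (b + 1) * (2 * real c + 1) + 1) * ln (real n)"
proof -
  define x where "x = ln (real n)"
  define l where "l = sched_l n c"
  define W where "W = 8 * (b + 1) * (2 * real c + 1)"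
  define v where "v = W * x / ln (real l)"
  note P = sched_l_bounds[OF n c, folded x_def l_def]
  have "ln (real l) \<ge> 1 / 2" using P(2,3) by linarith
  moreover have "W * x \<ge> 0" using b P(1) unfolding W_def by simp
  ultimately have "v \<le> W * x / (1 / 2)" "v \<ge> 0"
    unfolding v_def using divide_left_mono[of "1 / 2" "ln (real l)" "W * x"] by auto
  moreover have "sched_k n c b = nat \<lceil>v\<rceil>" unfolding sched_k_def v_def W_def x_def l_def ..
  ultimately have "real (sched_k n c b) \<le> v + 1" "v \<le> 2 * W * x"
    using ceiling_correct[of v] by auto
  then show ?thesis using P(1) unfolding W_def x_def by (simp add: algebra_simps)
qed

lemma weak_steps_le:
  fixes n c :: nat and \<beta> :: real and T :: nat
  assumes n: "n \<ge> 32" and c: "c \<ge> 1" and \<beta>: "\<beta> \<ge> 1" and T: "1 \<le> T"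
  shows "real (weak_steps n c \<beta> T) \<le> 16 * 151 * real c * ln (real n) * \<beta> * real T"
proof -
  define x where "x = ln (real n)"
  define l where "l = sched_l n c"
  note P = sched_l_bounds[OF n c, folded x_def l_def]
  have cap: "sched_l' n c \<beta> \<le> 4 * \<beta> * (151 * real c * x)" "sched_l' n c \<beta> \<ge> 1"
    using P(4) \<beta> mult_left_mono[of "real l" "151 * real c * x" "4 * \<beta>"]
      one_le_sched_l'[OF P(5)[unfolded l_def] \<beta>]
    unfolding sched_l'_def l_def[symmetric] by auto
  have "(2::nat) ^ sched_e T \<le> 2 * T" using sched_e_bounds(2)[OF T] by simp
  then have "real ((2::nat) ^ sched_e T) \<le> real (2 * T)" by (simp only: of_nat_le_iff)
  then have "2 * real ((2::nat) ^ sched_e T) * sched_l' n c \<beta> \<le> 2 * (2 * real T) * (4 * \<beta> * (151 * real c * x))"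
    using cap by (intro mult_mono) auto
  then show ?thesis using weak_steps_bounds(2)[OF cap(2), of T] unfolding x_def by (simp add: algebra_simps)
qed

lemma noisy_time_le:
  fixes n c :: nat and b \<beta> :: real and T :: nat
  assumes "n \<ge> 32" "c \<ge> 1" "b \<ge> 0" "\<beta> \<ge> 1" "1 \<le> T"
  shows "real (noisy_time n c b \<beta> T) \<le>
    (16 * 151 * real c * (16 * (b + 1) * (2 * real c + 1) + 1)) * ln (real n) powr 2 * \<beta> * real T"
proof -
  have "ln (real n) \<ge> 0" using assms(1) by simp
  then have "real (noisy_time n c b \<beta> T) \<le>
      ((16 * (b + 1) * (2 * real c + 1) + 1) * ln (real n)) * (16 * 151 * real c * ln (real n) * \<beta> * real T)"
    unfolding noisy_time_def of_nat_mult using assms sched_k_le weak_steps_le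
    by (intro mult_mono) auto
  also have "\<dots> = (16 * 151 * real c * (16 * (b + 1) * (2 * real c + 1) + 1)) * ln (real n) powr 2 * \<beta> * real T"
    using \<open>ln (real n) \<ge> 0\<close> by (simp add: power2_eq_square powr_numeral)
  finally show ?thesis .
qed

lemma measure_good_hashes_ge:
  fixes M :: "nat set" and S :: "nat list set" and c :: nat and b b' :: real
  assumes M: "finite M" "card M \<ge> 32" and c: "c \<ge> 1" and S: "finite S" "card S \<le> card M ^ c"
    and b: "b \<ge> 0" "3 * real c + b' + 1 \<le> b"
  shows "1 - real (card M) powr (- b') \<le> measure rand_space (good_hashes M c b S)"
proof -
  interpret prob_space rand_space by (rule prob_space_rand_space)
  define n where "n = card M"
  define l where "l = sched_l n c"
  define q where "q = real n powr ((real c + 2) / (3 * real l)) / (3 * real l)"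
  define R where "R = 4 * (b + 1) * (2 * real c + 1)"
  define E where "E = {e::nat. 2 ^ e < 2 * n ^ c}"
  have l: "l \<ge> 1" using sched_l_bounds(5)[OF M(2) c] unfolding l_def n_def .
  have "measure rand_space (UNIV - good_hashes M c b S)
      \<le> real (card E) * ((1 + q ^ sched_k n c b) ^ card (job_pool M c S) - 1)"
    unfolding E_def n_def
    by (rule measure_not_good_hashes_le[OF M(1) S(1) l[unfolded l_def n_def]])
      (use M slot_sets_probability_le[OF M(1) _ l] in \<open>auto simp: q_def l_def n_def\<close>)
  also have "\<dots> \<le> real n powr (- b')"
  proof (rule union_bound_le_powr)
    show "card E \<le> 2 * n ^ c"
      using card_mono[of "{..<2 * n ^ c}" E] unfolding E_def by (auto intro: less_trans[OF less_exp])
    show "card (job_pool M c S) \<le> n ^ (2 * c)"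
      using S(2) unfolding job_pool_def n_def by (simp add: card_cartesian_product mult_2 power_add)
    show "q ^ sched_k n c b \<le> real n powr (- R)"
      unfolding q_def l_def R_def by (rule pow_sched_k_le) (use M(2) c in \<open>auto simp: n_def\<close>)
    have "4 * (b + 1) \<le> R" "2 * real c + 1 \<le> R"
      using b mult_left_mono[of 1 "2 * real c + 1" "4 * (b + 1)"]
        mult_right_mono[of 1 "4 * (b + 1)" "2 * real c + 1"] unfolding R_def by auto
    then show "2 * real c + 1 \<le> R" "3 * real c + b' + 1 \<le> R" using b by auto
  qed (use M(2) in \<open>auto simp: n_def q_def\<close>)
  finally show ?thesis using prob_compl[of "good_hashes M c b S"] good_hashes_in_sets[OF S(1)]
    unfolding n_def by simp
qed

lemma noisy_scheduler_for_machines: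
  fixes M :: "nat set" and S :: "nat list set" and c :: nat and b b' :: real
  assumes c: "c \<ge> 1" and M: "finite M" "card M \<ge> 32" and S: "S \<subseteq> lists M" "finite S" "card S \<le> card M ^ c"
    and b: "b \<ge> 0" "3 * real c + b' + 1 \<le> b"
  shows "\<exists>A\<in>sets rand_space.
    measure rand_space A \<ge> 1 - real (card M) powr (- b') \<and>
    (\<forall>\<omega>\<in>A. \<forall>J. valid_jobs M c S J \<longrightarrow>
      (\<forall>(\<beta>::real) (T::nat). \<beta> \<ge> 1 \<and> 1 \<le> T \<and> T \<le> card M ^ c \<longrightarrow>
        real (noisy_time (card M) c b \<beta> T)
          \<le> (16 * 151 * real c * (16 * (b + 1) * (2 * real c + 1) + 1)) * ln (real (card M)) powr 2 * \<beta> * real T \<and>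
        (\<forall>JS P. good_subset M \<beta> T J JS \<and> noisy_run M c b \<beta> T \<omega> J P \<longrightarrow>
          4 * card {j\<in>JS. P (noisy_time (card M) c b \<beta> T) j = length (fst j)} \<ge> card JS)))"
proof (intro bexI[of _ "good_hashes M c b S"] conjI ballI allI impI)
  show "good_hashes M c b S \<in> sets rand_space" by (rule good_hashes_in_sets[OF S(2)])
  show "1 - real (card M) powr (- b') \<le> measure rand_space (good_hashes M c b S)"
    by (rule measure_good_hashes_ge[OF M c S(2,3) b])
  fix \<omega> J and \<beta> :: real and T :: nat assume \<beta>T: "\<beta> \<ge> 1 \<and> 1 \<le> T \<and> T \<le> card M ^ c"
  then show "real (noisy_time (card M) c b \<beta> T)
      \<le> (16 * 151 * real c * (16 * (b + 1) * (2 * real c + 1) + 1)) * ln (real (card M)) powr 2 * \<beta> * real T"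
    using noisy_time_le[OF M(2) c b(1)] by blast
  fix JS P assume "\<omega> \<in> good_hashes M c b S" "valid_jobs M c S J"
    "good_subset M \<beta> T J JS \<and> noisy_run M c b \<beta> T \<omega> J P"
  then show "card JS \<le> 4 * card {j\<in>JS. P (noisy_time (card M) c b \<beta> T) j = length (fst j)}"
    using good_hashes_complete_quarter[OF M(1) sched_l_bounds(5)[OF M(2) c] S(1)] \<beta>T by blast
qed

theorem lemma5p6:
  fixes c :: nat and b' :: real
  assumes "c \<ge> 1"
  shows "\<exists>b::real. b > 0 \<and> (\<exists>C d :: real.
     \<forall>M :: nat set. \<forall>S :: nat list set.
       finite M \<and> card M \<ge> 32 \<and> S \<subseteq> lists M \<and> finite S \<and> card S \<le> card M ^ c
       \<and> (\<forall>s\<in>S. length s \<le> card M ^ c) \<longrightarrow>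
       (\<exists>A\<in>sets rand_space.
          measure rand_space A \<ge> 1 - real (card M) powr (- b') \<and>
          (\<forall>\<omega>\<in>A. \<forall>J. valid_jobs M c S J \<longrightarrow>
             (\<forall>(\<beta>::real) (T::nat). \<beta> \<ge> 1 \<and> 1 \<le> T \<and> T \<le> card M ^ c \<longrightarrow>
                real (noisy_time (card M) c b \<beta> T) \<le> C * ln (real (card M)) powr d * \<beta> * real T \<and>
                (\<forall>JS P. good_subset M \<beta> T J JS \<and> noisy_run M c b \<beta> T \<omega> J P \<longrightarrow>
                   4 * card {j\<in>JS. P (noisy_time (card M) c b \<beta> T) j = length (fst j)}
                     \<ge> card JS)))))"
proof -
  define b where "b = 3 * real c + \<bar>b'\<bar> + 1"
  have b: "b > 0" "b \<ge> 0" "3 * real c + b' + 1 \<le> b" unfolding b_def by auto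
  show ?thesis
    by (intro exI[of _ b] conjI[OF b(1)] exI[of _ "16 * 151 * real c * (16 * (b + 1) * (2 * real c + 1) + 1)"]
        exI[of _ 2] allI impI, elim conjE)
      (rule noisy_scheduler_for_machines[OF assms _ _ _ _ _ b(2,3)])
qed

end
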